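(* On the unit sphere $S^2\subset\mathbb R^3$ consider the motion $\ddot x+|\dot x|^2x=A^2x-|Ax|^2x$ of a particle under the potential $V(x)=-\tfrac12|Ax|^2$, where $A=\mathrm{diag}(\lambda_1,\lambda_2,\lambda_3)$ with $\lambda_2>\lambda_1>\lambda_3=0$. For the associated Hamiltonian flow on $T^*S^2$, the points $\mathcal P=(0,0,-1,0,0,0)$ and $\widetilde{\mathcal P}=(0,0,1,0,0,0)$ are hyperbolic equilibria, and the stable invariant manifold of $\widetilde{\mathcal P}$ and the unstable invariant manifold of $\mathcal P$ intersect transversely (inside their common energy level) along the heteroclinic orbit $\gamma$ from $\mathcal P$ to $\widetilde{\mathcal P}$ that runs along the half great circle $\{x_2=0,\ x_1>0\}$. *)

theory Defs
  imports "HOL-Analysis.Analysis"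
begin

text \<open>Phase space coordinates: a state is a pair (x, p) of vectors in R^3 (position, momentum).\<close>
type_synonym state = "(real^3) \<times> (real^3)"

definition Amat :: "real \<Rightarrow> real \<Rightarrow> real \<Rightarrow> real^3 \<Rightarrow> real^3" where
  "Amat l1 l2 l3 x = vector [l1 * x$1, l2 * x$2, l3 * x$3]"

text \<open>Cotangent bundle T*S^2 embedded in R^6: |x| = 1, x . p = 0.\<close>
definition TS2 :: "state set" where
  "TS2 = {(x, p). norm x = 1 \<and> inner x p = 0}"

text \<open>Vector field of the motion x'' + |x'|^2 x = A^2 x - |Ax|^2 x, written as
  x' = p, p' = A^2 x - |Ax|^2 x - |p|^2 x.\<close>
definition field :: "real \<Rightarrow> real \<Rightarrow> real \<Rightarrow> state \<Rightarrow> state" where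
  "field l1 l2 l3 z = (case z of (x, p) \<Rightarrow>
     (p, Amat l1 l2 l3 (Amat l1 l2 l3 x) - (norm (Amat l1 l2 l3 x))^2 *\<^sub>R x - (norm p)^2 *\<^sub>R x))"

definition energy :: "real \<Rightarrow> real \<Rightarrow> real \<Rightarrow> state \<Rightarrow> real" where
  "energy l1 l2 l3 z = (case z of (x, p) \<Rightarrow> (norm p)^2 / 2 - (norm (Amat l1 l2 l3 x))^2 / 2)"

definition energy_level :: "real \<Rightarrow> real \<Rightarrow> real \<Rightarrow> state \<Rightarrow> state set" where
  "energy_level l1 l2 l3 q = {z \<in> TS2. energy l1 l2 l3 z = energy l1 l2 l3 q}"

definition is_traj :: "('a::real_normed_vector \<Rightarrow> 'a) \<Rightarrow> (real \<Rightarrow> 'a) \<Rightarrow> bool" where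
  "is_traj F y \<longleftrightarrow> (\<forall>t. (y has_vector_derivative F (y t)) (at t))"

definition stable_set :: "('a::real_normed_vector \<Rightarrow> 'a) \<Rightarrow> 'a set \<Rightarrow> 'a \<Rightarrow> 'a set" where
  "stable_set F M q = {z \<in> M. \<exists>y. is_traj F y \<and> y 0 = z \<and> (y \<longlongrightarrow> q) at_top}"

definition unstable_set :: "('a::real_normed_vector \<Rightarrow> 'a) \<Rightarrow> 'a set \<Rightarrow> 'a \<Rightarrow> 'a set" where
  "unstable_set F M q = {z \<in> M. \<exists>y. is_traj F y \<and> y 0 = z \<and> (y \<longlongrightarrow> q) at_bot}"

text \<open>(Bouligand) tangent cone of a set S at z; for a C^1 submanifold it is the tangent space.\<close>
definition tangent_cone :: "'a::real_normed_vector set \<Rightarrow> 'a \<Rightarrow> 'a set" where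
  "tangent_cone S z = {v. \<exists>zs ts. (\<forall>n. zs n \<in> S) \<and> zs \<longlonglongrightarrow> z \<and> (\<forall>n. ts n > 0) \<and>
       ts \<longlonglongrightarrow> 0 \<and> (\<lambda>n. (1 / ts n) *\<^sub>R (zs n - z)) \<longlonglongrightarrow> v}"

text \<open>Hyperbolic equilibrium of F on the invariant manifold M: F q = 0 and the linearisation
  DF(q), restricted to the tangent space T_q M, has no eigenvalue on the imaginary axis
  (i omega with eigenvector u + i w, u, w in T_q M, written out in real form).\<close>
definition hyperbolic_equilibrium :: "('a::real_normed_vector \<Rightarrow> 'a) \<Rightarrow> 'a set \<Rightarrow> 'a \<Rightarrow> bool" where
  "hyperbolic_equilibrium F M q \<longleftrightarrow> q \<in> M \<and> F q = 0 \<and>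
     (\<exists>L. (F has_derivative L) (at q) \<and>
        (\<forall>u \<in> span (tangent_cone M q). \<forall>w \<in> span (tangent_cone M q). \<forall>\<omega>::real.
            L u = - (\<omega> *\<^sub>R w) \<and> L w = \<omega> *\<^sub>R u \<longrightarrow> u = 0 \<and> w = 0))"

definition transversal_at :: "'a::real_normed_vector set \<Rightarrow> 'a set \<Rightarrow> 'a set \<Rightarrow> 'a \<Rightarrow> bool" where
  "transversal_at W1 W2 E z \<longleftrightarrow> z \<in> W1 \<and> z \<in> W2 \<and>
     {a + b | a b. a \<in> span (tangent_cone W1 z) \<and> b \<in> span (tangent_cone W2 z)}
       = span (tangent_cone E z)"

end

theory Submission
  imports Defs
begin

text \<open>At the poles the linearisation restricted to the tangent space of \<open>T\<^sup>*S\<^sup>2\<close> has the real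
  eigenvalues \<open>\<plusminus>l1, \<plusminus>l2\<close>. The connection comes from an explicit one-parameter family of
  solutions \<open>x = n / d\<close>, rational in \<open>e\<^sup>l\<^sup>1\<^sup>t\<close> and \<open>e\<^sup>l\<^sup>2\<^sup>t\<close>, all tending to the north pole as
  \<open>t \<rightarrow> \<infinity>\<close>; its member \<open>m = 0\<close> is \<open>\<gamma>\<close>, and the reversing symmetry
  \<open>(x, p)(t) \<mapsto> (x\<^sub>1, x\<^sub>2, -x\<^sub>3, -p\<^sub>1, -p\<^sub>2, p\<^sub>3)(-t)\<close> maps the family to solutions tending to the
  south pole as \<open>t \<rightarrow> -\<infinity>\<close> and fixes \<open>\<gamma>\<close>. The \<open>m\<close>-derivatives of the two families at a point of
  \<open>\<gamma>\<close> are tangent to the stable and unstable manifolds and leave the plane \<open>x\<^sub>2 = p\<^sub>2 = 0\<close>; together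
  with the vector field they span the three-dimensional tangent space of the energy level, since a
  \<open>2 \<times> 2\<close> determinant equals \<open>8 l2 (l2 - l1) / (l1 + l2) \<noteq> 0\<close>. Any orbit as in the statement
  lies on \<open>\<gamma>\<close>: zero energy and \<open>x\<^sub>2 \<equiv> 0\<close> force \<open>p = l1 x\<^sub>1 (-x\<^sub>3, 0, x\<^sub>1)\<close>.\<close>

lemma vector3_eq_axis:
  "(vector [a, b, c] :: real^3) = a *\<^sub>R axis 1 1 + b *\<^sub>R axis 2 1 + c *\<^sub>R axis 3 1"
  by (simp add: vec_eq_iff forall_3 axis_def)

lemma has_vector_derivative_vector3:
  assumes "(f1 has_real_derivative d1) F" "(f2 has_real_derivative d2) F"
    "(f3 has_real_derivative d3) F"
  shows "((\<lambda>t. vector [f1 t, f2 t, f3 t] :: real^3) has_vector_derivative vector [d1, d2, d3]) F"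
  unfolding vector3_eq_axis
  using assms[unfolded has_real_derivative_iff_has_vector_derivative]
  by (intro has_vector_derivative_add bounded_linear.has_vector_derivative[OF bounded_linear_scaleR_left])

lemma tendsto_vector3:
  assumes "(f1 \<longlongrightarrow> a1) F" "(f2 \<longlongrightarrow> a2) F" "(f3 \<longlongrightarrow> a3) F"
  shows "((\<lambda>t. vector [f1 t, f2 t, f3 t] :: real^3) \<longlongrightarrow> vector [a1, a2, a3]) F"
  unfolding vector3_eq_axis by (intro tendsto_intros assms)

lemma norm_power2_vec3: "norm (v::real^3) ^ 2 = v$1^2 + v$2^2 + v$3^2"
  by (simp only: power2_norm_eq_inner) (simp add: inner_vec_def sum_3 power2_eq_square)

lemma inner_vec3: "inner (u::real^3) v = u$1 * v$1 + u$2 * v$2 + u$3 * v$3"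
  by (simp add: inner_vec_def sum_3)

lemma norm_vector3: "norm (vector [a, b, c] :: real^3) = sqrt (a^2 + b^2 + c^2)"
  by (simp add: norm_eq_sqrt_inner inner_vec3 power2_eq_square)

lemma Amat_nth [simp]:
  "Amat l1 l2 l3 x $ 1 = l1 * x$1" "Amat l1 l2 l3 x $ 2 = l2 * x$2" "Amat l1 l2 l3 x $ 3 = l3 * x$3"
  by (simp_all add: Amat_def)

lemma linear_Amat: "linear (Amat l1 l2 l3)"
  by (rule linearI) (simp_all add: vec_eq_iff forall_3 algebra_simps)

lemma Amat_zero [simp]: "Amat l1 l2 l3 0 = 0"
  by (rule linear_0[OF linear_Amat])

lemma bounded_linear_Amat: "bounded_linear (Amat l1 l2 l3)"
  using linear_Amat linear_conv_bounded_linear by blast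

lemma Amat_has_derivative [derivative_intros]:
  "(f has_derivative f') F \<Longrightarrow> ((\<lambda>x. Amat l1 l2 l3 (f x)) has_derivative (\<lambda>x. Amat l1 l2 l3 (f' x))) F"
  by (rule bounded_linear.has_derivative[OF bounded_linear_Amat])

lemma inner_Amat_Amat:
  "inner x (Amat l1 l2 l3 (Amat l1 l2 l3 y)) = inner (Amat l1 l2 l3 x) (Amat l1 l2 l3 y)"
  by (simp add: inner_vec3 algebra_simps)

lemma field_eq:
  "field l1 l2 l3 z = (snd z, Amat l1 l2 l3 (Amat l1 l2 l3 (fst z))
     - (norm (Amat l1 l2 l3 (fst z)))^2 *\<^sub>R fst z - (norm (snd z))^2 *\<^sub>R fst z)"
  by (cases z) (simp add: field_def)

lemma energy_eq: "energy l1 l2 l3 z = (norm (snd z))^2 / 2 - (norm (Amat l1 l2 l3 (fst z)))^2 / 2"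
  by (cases z) (simp add: energy_def)

lemma field_has_derivative:
  "(field l1 l2 l3 has_derivative (\<lambda>h. (snd h, Amat l1 l2 l3 (Amat l1 l2 l3 (fst h))
     - (2 * inner (Amat l1 l2 l3 (fst z)) (Amat l1 l2 l3 (fst h))) *\<^sub>R fst z
     - (inner (Amat l1 l2 l3 (fst z)) (Amat l1 l2 l3 (fst z))) *\<^sub>R fst h
     - (2 * inner (snd z) (snd h)) *\<^sub>R fst z
     - (inner (snd z) (snd z)) *\<^sub>R fst h))) (at z)"
proof -
  have "field l1 l2 l3 = (\<lambda>z. (snd z, Amat l1 l2 l3 (Amat l1 l2 l3 (fst z))
     - (inner (Amat l1 l2 l3 (fst z)) (Amat l1 l2 l3 (fst z))) *\<^sub>R fst z - (inner (snd z) (snd z)) *\<^sub>R fst z))"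
    by (simp add: fun_eq_iff field_eq power2_norm_eq_inner)
  then show ?thesis
    by (auto intro!: derivative_eq_intros simp: algebra_simps inner_commute)
qed

lemma energy_pole: "energy l1 l2 0 (vector [0, 0, s], 0) = 0"
  by (simp add: energy_eq norm_power2_vec3)

section \<open>Tangent cones\<close>

lemma tangent_cone_mono: "S \<subseteq> T \<Longrightarrow> tangent_cone S z \<subseteq> tangent_cone T z"
  unfolding tangent_cone_def by blast

lemma tangent_cone_level_set:
  fixes G :: "'a::real_normed_vector \<Rightarrow> 'b::real_normed_vector"
  assumes v: "v \<in> tangent_cone S z" and G: "(G has_derivative G') (at z)"
    and const: "\<And>w. w \<in> S \<Longrightarrow> G w = G z"
  shows "G' v = 0"
proof -
  obtain zs ts where zs: "\<And>n. zs n \<in> S" "zs \<longlonglongrightarrow> z" and ts: "\<And>n. ts n > 0"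
    and quot: "(\<lambda>n. (1 / ts n) *\<^sub>R (zs n - z)) \<longlonglongrightarrow> v"
    using v unfolding tangent_cone_def by blast
  have lin: "bounded_linear G'" using G by (rule has_derivative_bounded_linear)
  have small: "norm (G' v) \<le> e * norm v" if e: "e > 0" for e
  proof -
    obtain d where d: "d > 0"
      and approx: "\<And>w. norm (w - z) < d \<Longrightarrow> norm (G w - G z - G' (w - z)) \<le> e * norm (w - z)"
      using G e unfolding has_derivative_at_alt by blast
    have "eventually (\<lambda>n. norm (zs n - z) < d) sequentially"
      using tendstoD[OF zs(2) d] by (simp add: dist_norm)
    then have "eventually (\<lambda>n. norm (G' ((1 / ts n) *\<^sub>R (zs n - z)))
                                \<le> e * norm ((1 / ts n) *\<^sub>R (zs n - z))) sequentially"
    proof eventually_elim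
      case (elim n)
      have "norm (G' (zs n - z)) \<le> e * norm (zs n - z)"
        using approx[OF elim] const[OF zs(1)] by simp
      then have "(1 / ts n) * norm (G' (zs n - z)) \<le> (1 / ts n) * (e * norm (zs n - z))"
        using ts[of n] by (intro mult_left_mono) auto
      then show ?case
        using ts[of n] by (simp add: linear_scale[OF bounded_linear.linear[OF lin]])
    qed
    moreover have "(\<lambda>n. norm (G' ((1 / ts n) *\<^sub>R (zs n - z)))) \<longlonglongrightarrow> norm (G' v)"
      by (intro tendsto_norm bounded_linear.tendsto[OF lin quot])
    moreover have "(\<lambda>n. e * norm ((1 / ts n) *\<^sub>R (zs n - z))) \<longlonglongrightarrow> e * norm v"
      by (intro tendsto_mult_left tendsto_norm quot)
    ultimately show ?thesis by (intro tendsto_le[of sequentially]) auto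
  qed
  have "norm (G' v) \<le> 0"
  proof (rule ccontr)
    assume "\<not> norm (G' v) \<le> 0"
    then have pos: "norm (G' v) > 0" by simp
    have "norm (G' v) \<le> norm (G' v) / (norm v + 1) * norm v"
      using pos by (intro small) (simp add: add_nonneg_pos)
    also have "\<dots> = norm (G' v) * (norm v / (norm v + 1))" by simp
    also have "\<dots> < norm (G' v) * 1"
      using pos by (intro mult_strict_left_mono) (simp_all add: add_nonneg_pos)
    finally show False by simp
  qed
  then show ?thesis by simp
qed

lemma tangent_cone_TS2:
  assumes "v \<in> tangent_cone S z" "S \<subseteq> TS2" "z \<in> TS2"
  shows "inner (fst z) (fst v) = 0" "inner (fst v) (snd z) + inner (fst z) (snd v) = 0"
proof -
  have on_TS2: "inner (fst w) (fst w) = 1" "inner (fst w) (snd w) = 0" if "w \<in> TS2" for w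
    using that by (auto simp: TS2_def simp flip: power2_norm_eq_inner)
  have "inner (fst v) (fst z) + inner (fst z) (fst v) = 0"
    by (rule tangent_cone_level_set[OF assms(1), of "\<lambda>w. inner (fst w) (fst w)"
          "\<lambda>h. inner (fst h) (fst z) + inner (fst z) (fst h)"])
       (use assms(2,3) on_TS2 in \<open>auto intro!: derivative_eq_intros\<close>)
  then show "inner (fst z) (fst v) = 0" by (simp add: inner_commute)
  show "inner (fst v) (snd z) + inner (fst z) (snd v) = 0"
    by (rule tangent_cone_level_set[OF assms(1), of "\<lambda>w. inner (fst w) (snd w)"
          "\<lambda>h. inner (fst h) (snd z) + inner (fst z) (snd h)"])
       (use assms(2,3) on_TS2 in \<open>auto intro!: derivative_eq_intros\<close>)
qed

lemma tangent_cone_energy_level: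
  assumes "v \<in> tangent_cone (energy_level l1 l2 l3 q) z" "z \<in> energy_level l1 l2 l3 q"
  shows "inner (snd z) (snd v) = inner (Amat l1 l2 l3 (fst z)) (Amat l1 l2 l3 (fst v))"
proof -
  let ?A = "Amat l1 l2 l3"
  have energy_fun: "energy l1 l2 l3 = (\<lambda>w. inner (snd w) (snd w) / 2 - inner (?A (fst w)) (?A (fst w)) / 2)"
    by (simp add: fun_eq_iff energy_eq power2_norm_eq_inner)
  have "(inner (snd v) (snd z) + inner (snd z) (snd v)) / 2
      - (inner (?A (fst v)) (?A (fst z)) + inner (?A (fst z)) (?A (fst v))) / 2 = 0"
    by (rule tangent_cone_level_set[OF assms(1), of "energy l1 l2 l3" "\<lambda>h.
          (inner (snd h) (snd z) + inner (snd z) (snd h)) / 2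
          - (inner (?A (fst h)) (?A (fst z)) + inner (?A (fst z)) (?A (fst h))) / 2"])
       (use assms(2) in \<open>auto intro!: derivative_eq_intros simp: energy_fun energy_level_def fun_eq_iff field_simps\<close>)
  then show ?thesis by (simp add: inner_commute)
qed

lemma has_vector_derivative_in_tangent_cone:
  fixes g :: "real \<Rightarrow> 'a::real_normed_vector"
  assumes "(g has_vector_derivative v) (at 0)" "\<And>h. h > 0 \<Longrightarrow> g h \<in> S"
  shows "v \<in> tangent_cone S (g 0)"
proof -
  define ts where "ts n = inverse (real (Suc n))" for n
  have ts_pos: "ts n > 0" for n by (simp add: ts_def)
  have ts_lim: "ts \<longlonglongrightarrow> 0" unfolding ts_def by (rule LIMSEQ_inverse_real_of_nat)
  have ts_at: "filterlim ts (at 0) sequentially"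
    using ts_pos by (intro filterlim_atI[OF ts_lim] always_eventually) (metis less_irrefl)
  have g_lim: "(\<lambda>n. g (ts n)) \<longlonglongrightarrow> g 0"
    by (rule isCont_tendsto_compose[OF has_vector_derivative_continuous[OF assms(1)] ts_lim])
  have "((\<lambda>h. (1 / norm (h - 0)) *\<^sub>R (g h - (g 0 + (h - 0) *\<^sub>R v))) \<longlongrightarrow> 0) (at 0)"
    using assms(1) by (simp add: has_vector_derivative_def has_derivative_at2)
  from tendsto_add[OF filterlim_compose[OF this ts_at] tendsto_const[of v]]
  have "(\<lambda>n. (1 / norm (ts n - 0)) *\<^sub>R (g (ts n) - (g 0 + (ts n - 0) *\<^sub>R v)) + v) \<longlonglongrightarrow> v"
    by simp
  moreover have "(1 / norm (ts n - 0)) *\<^sub>R (g (ts n) - (g 0 + (ts n - 0) *\<^sub>R v)) + v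
      = (1 / ts n) *\<^sub>R (g (ts n) - g 0)" for n
    using ts_pos[of n] by (simp add: algebra_simps)
  ultimately have "(\<lambda>n. (1 / ts n) *\<^sub>R (g (ts n) - g 0)) \<longlonglongrightarrow> v" by simp
  then show ?thesis unfolding tangent_cone_def mem_Collect_eq
    using assms(2) ts_pos ts_lim g_lim by (intro exI[of _ "\<lambda>n. g (ts n)"] exI[of _ ts]) simp
qed

section \<open>Hyperbolicity of the poles\<close>

lemma pole_linearisation_no_imaginary_eigenvalue:
  fixes u w :: state
  assumes l: "0 < l1" "0 < l2"
    and horizontal: "fst u $ 3 = 0" "snd u $ 3 = 0" "fst w $ 3 = 0" "snd w $ 3 = 0"
    and eigen: "(snd u, Amat l1 l2 l3 (Amat l1 l2 l3 (fst u))) = - (\<omega> *\<^sub>R w)"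
      "(snd w, Amat l1 l2 l3 (Amat l1 l2 l3 (fst w))) = \<omega> *\<^sub>R u"
  shows "u = 0 \<and> w = 0"
proof -
  obtain a b where u: "u = (a, b)" by (cases u)
  obtain c d where w: "w = (c, d)" by (cases w)
  have e: "b = - (\<omega> *\<^sub>R c)" "Amat l1 l2 l3 (Amat l1 l2 l3 a) = - (\<omega> *\<^sub>R d)" "d = \<omega> *\<^sub>R a"
    "Amat l1 l2 l3 (Amat l1 l2 l3 c) = \<omega> *\<^sub>R b"
    using eigen by (simp_all add: u w)
  have "l1 * (l1 * a$1) = - \<omega> * (\<omega> * a$1)" "l2 * (l2 * a$2) = - \<omega> * (\<omega> * a$2)"
    "l1 * (l1 * c$1) = - \<omega> * (\<omega> * c$1)" "l2 * (l2 * c$2) = - \<omega> * (\<omega> * c$2)"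
    using e by (auto simp: vec_eq_iff forall_3)
  then have "(l1^2 + \<omega>^2) * a$1 = 0" "(l2^2 + \<omega>^2) * a$2 = 0"
    "(l1^2 + \<omega>^2) * c$1 = 0" "(l2^2 + \<omega>^2) * c$2 = 0"
    by (simp_all add: algebra_simps power2_eq_square)
  moreover have "l1^2 + \<omega>^2 > 0" "l2^2 + \<omega>^2 > 0" using l by (simp_all add: add_pos_nonneg)
  ultimately have "a = 0" "c = 0" using horizontal l by (simp_all add: u w vec_eq_iff forall_3)
  then show ?thesis using e by (simp add: u w zero_prod_def)
qed

lemma hyperbolic_equilibrium_pole:
  assumes l: "0 < l1" "0 < l2" "l3 = 0" and s: "s^2 = 1"
  shows "hyperbolic_equilibrium (field l1 l2 l3) TS2 (vector [0, 0, s], 0)"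
proof -
  let ?P = "(vector [0, 0, s] :: real^3, 0 :: real^3)"
  let ?A = "Amat l1 l2 l3"
  have P_TS2: "?P \<in> TS2" using s by (simp add: TS2_def norm_vector3)
  have A_pole: "?A (vector [0, 0, s]) = 0" using l by (simp add: vec_eq_iff forall_3)
  have "(field l1 l2 l3 has_derivative (\<lambda>h. (snd h, ?A (?A (fst h))))) (at ?P)"
    using field_has_derivative[of l1 l2 l3 ?P] by (simp add: A_pole)
  moreover have "field l1 l2 l3 ?P = 0" by (simp add: field_eq A_pole prod_eq_iff)
  moreover
  define V where "V = {h::state. fst h $ 3 = 0 \<and> snd h $ 3 = 0}"
  have "tangent_cone TS2 ?P \<subseteq> V"
  proof
    fix v assume "v \<in> tangent_cone TS2 ?P"
    from tangent_cone_TS2[OF this order_refl P_TS2] show "v \<in> V"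
      using s by (auto simp: V_def inner_vec3 power2_eq_square)
  qed
  then have "span (tangent_cone TS2 ?P) \<subseteq> V"
    by (rule span_minimal) (simp add: subspace_def V_def)
  ultimately show ?thesis unfolding hyperbolic_equilibrium_def
    using P_TS2 pole_linearisation_no_imaginary_eigenvalue[OF l(1,2)] by (auto simp: V_def subset_iff)
qed

section \<open>Invariance of the phase space and conservation of energy\<close>

lemma has_real_derivative_inner:
  assumes "(f has_vector_derivative f') (at t)" "(g has_vector_derivative g') (at t)"
  shows "((\<lambda>t. inner (f t) (g t)) has_real_derivative (inner (f t) g' + inner f' (g t))) (at t)"
  using bounded_bilinear.has_vector_derivative[OF bounded_bilinear_inner assms]
  by (simp add: has_real_derivative_iff_has_vector_derivative)

lemma traj_has_vector_derivative:
  assumes "is_traj (field l1 l2 l3) y"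
  shows "((\<lambda>t. fst (y t)) has_vector_derivative snd (y t)) (at t)"
    "((\<lambda>t. snd (y t)) has_vector_derivative snd (field l1 l2 l3 (y t))) (at t)"
proof -
  have d: "(y has_vector_derivative field l1 l2 l3 (y t)) (at t)" using assms is_traj_def by auto
  from bounded_linear.has_vector_derivative[OF bounded_linear_fst d]
  show "((\<lambda>t. fst (y t)) has_vector_derivative snd (y t)) (at t)" by (simp add: field_eq)
  from bounded_linear.has_vector_derivative[OF bounded_linear_snd d]
  show "((\<lambda>t. snd (y t)) has_vector_derivative snd (field l1 l2 l3 (y t))) (at t)" by simp
qed

lemma traj_has_real_derivative_component:
  assumes "is_traj (field l1 l2 l3) y"
  shows "((\<lambda>t. fst (y t) $ i) has_real_derivative snd (y t) $ i) (at t)"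
    "((\<lambda>t. snd (y t) $ i) has_real_derivative snd (field l1 l2 l3 (y t)) $ i) (at t)"
  using bounded_linear.has_vector_derivative[OF bounded_linear_vec_nth
      traj_has_vector_derivative(1)[OF assms, of t]]
    bounded_linear.has_vector_derivative[OF bounded_linear_vec_nth
      traj_has_vector_derivative(2)[OF assms, of t]]
  by (simp_all add: has_real_derivative_iff_has_vector_derivative)

lemma gronwall_zero:
  fixes h h' :: "real \<Rightarrow> real"
  assumes dh: "\<And>t. (h has_real_derivative h' t) (at t)" and h0: "h 0 = 0"
    and nonneg: "\<And>t. h t \<ge> 0" and bound: "\<And>t. t \<in> {-\<bar>T\<bar>..\<bar>T\<bar>} \<Longrightarrow> \<bar>h' t\<bar> \<le> K * h t"
  shows "h T = 0"
proof (cases "T \<ge> 0")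
  case True
  define k where "k t = h t * exp (- K * t)" for t
  have "k T \<le> k 0"
  proof (rule DERIV_nonpos_imp_nonincreasing[of 0 T k])
    fix t assume t: "0 \<le> t" "t \<le> T"
    have "(k has_real_derivative (h' t - K * h t) * exp (- K * t)) (at t)"
      unfolding k_def[abs_def] by (auto intro!: derivative_eq_intros dh simp: algebra_simps)
    moreover have "(h' t - K * h t) * exp (- K * t) \<le> 0"
      using bound[of t] t by (intro mult_nonpos_nonneg) auto
    ultimately show "\<exists>y. (k has_real_derivative y) (at t) \<and> y \<le> 0" by blast
  qed (use True in simp)
  then have "h T \<le> 0" by (simp add: k_def h0 mult_le_0_iff)
  then show ?thesis using nonneg[of T] by simp
next
  case False
  define k where "k t = h t * exp (K * t)" for t
  have "k T \<le> k 0"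
  proof (rule DERIV_nonneg_imp_nondecreasing[of T 0 k])
    fix t assume t: "T \<le> t" "t \<le> 0"
    have "(k has_real_derivative (h' t + K * h t) * exp (K * t)) (at t)"
      unfolding k_def[abs_def] by (auto intro!: derivative_eq_intros dh simp: algebra_simps)
    moreover have "(h' t + K * h t) * exp (K * t) \<ge> 0"
      using bound[of t] t by (intro mult_nonneg_nonneg) auto
    ultimately show "\<exists>y. (k has_real_derivative y) (at t) \<and> y \<ge> 0" by blast
  qed (use False in simp)
  then have "h T \<le> 0" by (simp add: k_def h0 mult_le_0_iff)
  then show ?thesis using nonneg[of T] by simp
qed

text \<open>The constraints \<open>f = |x|\<^sup>2 - 1\<close> and \<open>g = x \<bullet> p\<close> satisfy a linear system with a zero
  solution, which is the only one by Gronwall's inequality for \<open>f\<^sup>2 + g\<^sup>2\<close>.\<close>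

lemma linear_constraint_system_zero:
  fixes f g c :: "real \<Rightarrow> real"
  assumes df: "\<And>t. (f has_real_derivative 2 * g t) (at t)"
    and dg: "\<And>t. (g has_real_derivative - c t * f t) (at t)"
    and cont: "continuous_on UNIV c" and f0: "f 0 = 0" and g0: "g 0 = 0"
  shows "f T = 0 \<and> g T = 0"
proof -
  obtain M where M: "M \<ge> 0" "\<And>t. t \<in> {-\<bar>T\<bar>..\<bar>T\<bar>} \<Longrightarrow> \<bar>c t\<bar> \<le> M"
    using continuous_on_compact_bound[OF compact_Icc continuous_on_subset[OF cont subset_UNIV]]
    by (metis real_norm_def)
  have "f T ^ 2 + g T ^ 2 = 0"
  proof (rule gronwall_zero[where h = "\<lambda>t. f t ^ 2 + g t ^ 2" and h' = "\<lambda>t. (4 - 2 * c t) * f t * g t"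
        and K = "2 + M"])
    show "((\<lambda>t. f t ^ 2 + g t ^ 2) has_real_derivative (4 - 2 * c t) * f t * g t) (at t)" for t
      by (auto intro!: derivative_eq_intros df dg simp: algebra_simps)
    show "\<bar>(4 - 2 * c t) * f t * g t\<bar> \<le> (2 + M) * (f t ^ 2 + g t ^ 2)"
      if "t \<in> {-\<bar>T\<bar>..\<bar>T\<bar>}" for t
    proof -
      have "\<bar>(4 - 2 * c t) * f t * g t\<bar> = \<bar>4 - 2 * c t\<bar> * \<bar>f t * g t\<bar>" by (simp add: abs_mult)
      also have "\<dots> \<le> (4 + 2 * M) * \<bar>f t * g t\<bar>" using M(2)[OF that] by (intro mult_right_mono) auto
      also have "\<dots> \<le> (4 + 2 * M) * ((f t ^ 2 + g t ^ 2) / 2)"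
        using M(1) sum_squares_bound[of "\<bar>f t\<bar>" "\<bar>g t\<bar>"] by (intro mult_left_mono) (auto simp: abs_mult)
      finally show ?thesis by (simp add: algebra_simps)
    qed
  qed (simp_all add: f0 g0)
  then show ?thesis by (simp add: add_nonneg_eq_0_iff)
qed

lemma traj_stays_in_TS2:
  assumes y: "is_traj (field l1 l2 l3) y" and y0: "y 0 \<in> TS2"
  shows "y t \<in> TS2"
proof -
  let ?A = "Amat l1 l2 l3"
  define x p where "x t = fst (y t)" and "p t = snd (y t)" for t
  define c where "c t = inner (?A (x t)) (?A (x t)) + inner (p t) (p t)" for t
  have dx: "(x has_vector_derivative p t) (at t)"
    and dp: "(p has_vector_derivative snd (field l1 l2 l3 (y t))) (at t)" for t
    using traj_has_vector_derivative[OF y, of t] by (simp_all add: x_def[abs_def] p_def[abs_def])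
  have "((\<lambda>t. inner (x t) (x t) - 1) has_real_derivative 2 * inner (x t) (p t)) (at t)" for t
    using DERIV_diff[OF has_real_derivative_inner[OF dx dx] DERIV_const] by (simp add: inner_commute)
  moreover have "((\<lambda>t. inner (x t) (p t)) has_real_derivative - c t * (inner (x t) (x t) - 1)) (at t)" for t
  proof -
    have "inner (x t) (snd (field l1 l2 l3 (y t))) + inner (p t) (p t) = - c t * (inner (x t) (x t) - 1)"
      by (simp add: field_eq c_def x_def p_def inner_diff_right inner_Amat_Amat power2_norm_eq_inner
          algebra_simps)
    then show ?thesis using has_real_derivative_inner[OF dx dp, of t] by simp
  qed
  moreover have "continuous_on UNIV c"
  proof -
    have "continuous_on UNIV y"
      using y unfolding is_traj_def
      by (intro continuous_at_imp_continuous_on) (auto intro: has_vector_derivative_continuous)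
    then show ?thesis unfolding c_def x_def p_def
      by (intro continuous_intros continuous_on_compose2[OF bounded_linear.continuous_on[OF bounded_linear_Amat]]) auto
  qed
  moreover have "inner (x 0) (x 0) - 1 = 0" "inner (x 0) (p 0) = 0"
    using y0 by (auto simp: TS2_def x_def p_def case_prod_beta simp flip: power2_norm_eq_inner)
  ultimately have "inner (x t) (x t) - 1 = 0 \<and> inner (x t) (p t) = 0"
    by (rule linear_constraint_system_zero)
  then have "inner (x t) (x t) = 1" "inner (x t) (p t) = 0" by simp_all
  then show ?thesis by (cases "y t") (auto simp: TS2_def norm_eq_sqrt_inner x_def p_def)
qed

lemma energy_constant_along_traj:
  assumes y: "is_traj (field l1 l2 l3) y" and y0: "y 0 \<in> TS2"
  shows "energy l1 l2 l3 (y t) = energy l1 l2 l3 (y 0)"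
proof -
  let ?A = "Amat l1 l2 l3"
  have energy_fun: "energy l1 l2 l3 = (\<lambda>w. inner (snd w) (snd w) / 2 - inner (?A (fst w)) (?A (fst w)) / 2)"
    by (simp add: fun_eq_iff energy_eq power2_norm_eq_inner)
  have "((\<lambda>t. energy l1 l2 l3 (y t)) has_real_derivative 0) (at t)" for t
  proof -
    note d = traj_has_vector_derivative[OF y, of t]
    have dA: "((\<lambda>t. ?A (fst (y t))) has_vector_derivative ?A (snd (y t))) (at t)"
      by (rule bounded_linear.has_vector_derivative[OF bounded_linear_Amat d(1)])
    have tangent: "inner (fst (y t)) (snd (y t)) = 0"
      using traj_stays_in_TS2[OF y y0, of t] by (auto simp: TS2_def case_prod_beta)
    have "(inner (snd (y t)) (snd (field l1 l2 l3 (y t))) + inner (snd (field l1 l2 l3 (y t))) (snd (y t))) / 2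
        - (inner (?A (fst (y t))) (?A (snd (y t))) + inner (?A (snd (y t))) (?A (fst (y t)))) / 2 = 0"
      using tangent by (simp add: field_eq inner_diff_right inner_diff_left inner_commute inner_Amat_Amat
          algebra_simps)
    with DERIV_diff[OF DERIV_cdivide[OF has_real_derivative_inner[OF d(2) d(2)], of 2]
          DERIV_cdivide[OF has_real_derivative_inner[OF dA dA], of 2]]
    show ?thesis unfolding energy_fun by simp
  qed
  then show ?thesis by (intro DERIV_isconst_all) auto
qed

lemma energy_eq_of_traj_tendsto:
  assumes y: "is_traj (field l1 l2 l3) y" "y 0 \<in> TS2" and lim: "(y \<longlongrightarrow> q) F" and F: "F \<noteq> bot"
  shows "energy l1 l2 l3 (y 0) = energy l1 l2 l3 q"
proof (rule tendsto_unique[OF F])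
  have "(\<lambda>t. energy l1 l2 l3 (y t)) = (\<lambda>t. energy l1 l2 l3 (y 0))"
    using energy_constant_along_traj[OF y] by (rule ext)
  moreover have "((\<lambda>t. energy l1 l2 l3 (y t)) \<longlongrightarrow> energy l1 l2 l3 q) F"
    unfolding energy_eq by (auto intro!: tendsto_intros bounded_linear.tendsto[OF bounded_linear_Amat] lim)
  ultimately show "((\<lambda>t. energy l1 l2 l3 (y 0)) \<longlongrightarrow> energy l1 l2 l3 q) F" by simp
qed (rule tendsto_const)

lemma stable_set_subset_energy_level:
  "stable_set (field l1 l2 l3) TS2 q \<subseteq> energy_level l1 l2 l3 q"
  by (auto simp: stable_set_def energy_level_def dest: energy_eq_of_traj_tendsto[OF _ _ _ trivial_limit_at_top_linorder])

lemma unstable_set_subset_energy_level: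
  "unstable_set (field l1 l2 l3) TS2 q \<subseteq> energy_level l1 l2 l3 q"
  by (auto simp: unstable_set_def energy_level_def dest: energy_eq_of_traj_tendsto[OF _ _ _ trivial_limit_at_bot_linorder])

section \<open>Time shifts and the reversing symmetry\<close>

lemma is_traj_shift:
  assumes "is_traj F y"
  shows "is_traj F (\<lambda>t. y (s + t))"
  unfolding is_traj_def
proof
  fix t
  have d1: "((\<lambda>t. s + t) has_vector_derivative 1) (at t)" by (auto intro!: derivative_eq_intros)
  have "(y has_vector_derivative F (y (s + t))) (at (s + t))" using assms is_traj_def by auto
  from vector_diff_chain_at[OF d1 this]
  show "((\<lambda>t. y (s + t)) has_vector_derivative F (y (s + t))) (at t)"
    by (auto intro!: derivative_eq_intros simp: o_def)
qed

lemma traj_in_stable_set: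
  assumes "is_traj F y" "y \<tau> \<in> M" "(y \<longlongrightarrow> q) at_top"
  shows "y \<tau> \<in> stable_set F M q"
proof -
  have "((\<lambda>t. y (\<tau> + t)) \<longlongrightarrow> q) at_top"
    by (rule filterlim_compose[OF assms(3) filterlim_tendsto_add_at_top[OF tendsto_const filterlim_ident]])
  then show ?thesis unfolding stable_set_def
    using is_traj_shift[OF assms(1)] assms(2) by fastforce
qed

lemma traj_in_unstable_set:
  assumes "is_traj F y" "y \<tau> \<in> M" "(y \<longlongrightarrow> q) at_bot"
  shows "y \<tau> \<in> unstable_set F M q"
proof -
  have "LIM t at_bot. \<tau> + t :> at_bot"
    using filterlim_tendsto_add_at_bot_iff[OF tendsto_const[of \<tau>], of "\<lambda>t. t" at_bot] filterlim_ident
    by auto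
  then have "((\<lambda>t. y (\<tau> + t)) \<longlongrightarrow> q) at_bot" by (rule filterlim_compose[OF assms(3)])
  then show ?thesis unfolding unstable_set_def
    using is_traj_shift[OF assms(1)] assms(2) by fastforce
qed

lemma traj_field_in_tangent_cone:
  assumes "is_traj F y" "\<And>h. y (t + h) \<in> S"
  shows "F (y t) \<in> tangent_cone S (y t)"
proof -
  have d1: "((\<lambda>h. t + h) has_vector_derivative 1) (at 0)" by (auto intro!: derivative_eq_intros)
  have "(y has_vector_derivative F (y (t + 0))) (at (t + 0))" using assms(1) is_traj_def by auto
  from vector_diff_chain_at[OF d1 this]
  have "((\<lambda>h. y (t + h)) has_vector_derivative F (y t)) (at 0)"
    by (auto intro!: derivative_eq_intros simp: o_def)
  from has_vector_derivative_in_tangent_cone[OF this, of S] assms(2) show ?thesis by simp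
qed

definition reflect :: "state \<Rightarrow> state" where
  "reflect z = (vector [fst z $ 1, fst z $ 2, - (fst z $ 3)], vector [- (snd z $ 1), - (snd z $ 2), snd z $ 3])"

lemma linear_reflect: "linear reflect"
  by (rule linearI) (simp_all add: reflect_def vec_eq_iff forall_3 algebra_simps)

lemma bounded_linear_reflect: "bounded_linear reflect"
  using linear_reflect linear_conv_bounded_linear by blast

lemma reflect_pole: "reflect (vector [0, 0, 1], 0) = (vector [0, 0, -1], 0)"
  by (simp add: reflect_def vec_eq_iff forall_3)

lemma reflect_TS2:
  assumes "z \<in> TS2"
  shows "reflect z \<in> TS2"
proof -
  have "norm (fst (reflect z)) = norm (fst z)"
    by (rule power2_eq_imp_eq) (simp_all add: reflect_def norm_power2_vec3)
  moreover have "inner (fst (reflect z)) (snd (reflect z)) = - inner (fst z) (snd z)"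
    by (simp add: reflect_def inner_vec3)
  ultimately show ?thesis using assms by (simp add: TS2_def case_prod_beta)
qed

lemma field_reflect: "field l1 l2 l3 (reflect z) = - reflect (field l1 l2 l3 z)"
  by (simp add: field_eq reflect_def vec_eq_iff forall_3 norm_power2_vec3 algebra_simps)

lemma is_traj_reflect:
  assumes "is_traj (field l1 l2 l3) y"
  shows "is_traj (field l1 l2 l3) (\<lambda>t. reflect (y (- t)))"
  unfolding is_traj_def
proof
  fix t
  have d1: "((\<lambda>t. - t) has_vector_derivative -1) (at t)" by (auto intro!: derivative_eq_intros)
  have "(y has_vector_derivative field l1 l2 l3 (y (- t))) (at (- t))" using assms is_traj_def by auto
  from vector_diff_chain_at[OF d1 this]
  have "((\<lambda>t. y (- t)) has_vector_derivative - field l1 l2 l3 (y (- t))) (at t)"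
    by (auto intro!: derivative_eq_intros simp: o_def)
  from bounded_linear.has_vector_derivative[OF bounded_linear_reflect this]
  show "((\<lambda>t. reflect (y (- t))) has_vector_derivative field l1 l2 l3 (reflect (y (- t)))) (at t)"
    by (simp add: field_reflect linear_neg[OF linear_reflect])
qed

section \<open>Trajectories given as quotients\<close>

definition ratio_state :: "real \<Rightarrow> real \<Rightarrow> real \<Rightarrow> real \<Rightarrow> real \<Rightarrow> real \<Rightarrow> real \<Rightarrow> real \<Rightarrow> state" where
  "ratio_state n1 n2 n3 d n1' n2' n3' d' =
     (vector [n1 / d, n2 / d, n3 / d],
      vector [(n1' * d - n1 * d') / d^2, (n2' * d - n2 * d') / d^2, (n3' * d - n3 * d') / d^2])"

lemma ratio_state_scale:
  assumes "w \<noteq> 0"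
  shows "ratio_state (n1 * w) (n2 * w) (n3 * w) (d * w) (n1' * w) (n2' * w) (n3' * w) (d' * w)
       = ratio_state n1 n2 n3 d n1' n2' n3' d'"
proof -
  have "(a * w) / (b * w) = a / b" for a b using assms by simp
  moreover have "((a' * w) * (b * w) - (a * w) * (b' * w)) / (b * w)^2 = (a' * b - a * b') / b^2"
    for a a' b b' using assms by (cases "b = 0") (simp_all add: field_simps power2_eq_square)
  ultimately show ?thesis by (simp only: ratio_state_def)
qed

lemma ratio_state_TS2:
  assumes "d \<noteq> 0" and sphere: "n1^2 + n2^2 + n3^2 = d^2"
    and tangent: "n1 * n1' + n2 * n2' + n3 * n3' = d * d'"
  shows "ratio_state n1 n2 n3 d n1' n2' n3' d' \<in> TS2"
proof -
  let ?z = "ratio_state n1 n2 n3 d n1' n2' n3' d'"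
  have "(norm (fst ?z))^2 = (n1^2 + n2^2 + n3^2) / d^2"
    by (simp add: ratio_state_def norm_power2_vec3 power_divide add_divide_distrib)
  then have "(norm (fst ?z))^2 = 1" using sphere assms(1) by simp
  then have "norm (fst ?z) = 1" using norm_ge_zero[of "fst ?z"] by (auto simp: power2_eq_1_iff)
  moreover have "inner (fst ?z) (snd ?z)
      = (d * (n1 * n1' + n2 * n2' + n3 * n3') - d' * (n1^2 + n2^2 + n3^2)) / d^3"
    using assms(1) by (simp add: ratio_state_def inner_vec3 field_simps power2_eq_square power3_eq_cube)
  ultimately show ?thesis using sphere tangent by (simp add: TS2_def case_prod_beta power2_eq_square)
qed

lemma ratio_state_multiplier:
  assumes "d \<noteq> 0" and sphere: "n1^2 + n2^2 + n3^2 = d^2"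
    and tangent: "n1 * n1' + n2 * n2' + n3 * n3' = d * d'"
    and energy: "2 * d'' * d - d'^2 = l1^2 * n1^2 + l2^2 * n2^2 + l3^2 * n3^2 + n1'^2 + n2'^2 + n3'^2"
  defines "z \<equiv> ratio_state n1 n2 n3 d n1' n2' n3' d'"
  shows "(norm (Amat l1 l2 l3 (fst z)))^2 + (norm (snd z))^2 = 2 * (d'' * d - d'^2) / d^2"
proof -
  have sq: "(n1' * d - n1 * d')^2 + (n2' * d - n2 * d')^2 + (n3' * d - n3 * d')^2
      = d^2 * (n1'^2 + n2'^2 + n3'^2 - d'^2)"
    using sphere tangent by algebra
  have "(norm (Amat l1 l2 l3 (fst z)))^2 + (norm (snd z))^2
      = (l1^2 * n1^2 + l2^2 * n2^2 + l3^2 * n3^2) / d^2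
        + ((n1' * d - n1 * d')^2 + (n2' * d - n2 * d')^2 + (n3' * d - n3 * d')^2) / (d^2)^2"
    by (simp add: z_def ratio_state_def norm_power2_vec3 power_divide power_mult_distrib add_divide_distrib)
  also have "\<dots> = (l1^2 * n1^2 + l2^2 * n2^2 + l3^2 * n3^2 + n1'^2 + n2'^2 + n3'^2 - d'^2) / d^2"
    unfolding sq using assms(1) by (simp add: field_simps power2_eq_square)
  also have "\<dots> = 2 * (d'' * d - d'^2) / d^2"
    using energy by (simp add: algebra_simps)
  finally show ?thesis .
qed

lemma DERIV_divide_power2:
  assumes "(n has_real_derivative n') (at t)" "(d has_real_derivative d') (at t)" "d t \<noteq> 0"
  shows "((\<lambda>t. n t / d t) has_real_derivative (n' * d t - n t * d') / (d t)^2) (at t)"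
  using DERIV_divide[OF assms] by (simp add: power2_eq_square)

lemma DERIV_divide_second:
  assumes "(n has_real_derivative n' t) (at t)" "(n' has_real_derivative n'') (at t)"
    "(d has_real_derivative d' t) (at t)" "(d' has_real_derivative d'') (at t)" "d t \<noteq> 0"
  shows "((\<lambda>t. (n' t * d t - n t * d' t) / (d t)^2) has_real_derivative
     ((n'' * d t - n t * d'') * d t - 2 * d' t * (n' t * d t - n t * d' t)) / (d t)^3) (at t)"
proof -
  have "((\<lambda>t. (n' t * d t - n t * d' t) / (d t)^2) has_real_derivative
     ((n'' * d t + n' t * d' t - (n' t * d' t + n t * d'')) * (d t)^2
       - (n' t * d t - n t * d' t) * (2 * d t * d' t)) / ((d t)^2 * (d t)^2)) (at t)"
    using assms by (auto intro!: derivative_eq_intros simp: power2_eq_square)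
  moreover have "((n'' * d t + n' t * d' t - (n' t * d' t + n t * d'')) * (d t)^2
       - (n' t * d t - n t * d' t) * (2 * d t * d' t)) / ((d t)^2 * (d t)^2)
     = ((n'' * d t - n t * d'') * d t - 2 * d' t * (n' t * d t - n t * d' t)) / (d t)^3"
    using assms(5) by (simp add: field_simps power2_eq_square power3_eq_cube)
  ultimately show ?thesis by simp
qed

lemma bilinear_second_derivative_eq:
  fixes n n' n'' d d' d'' l U :: real
  assumes "d \<noteq> 0" "n'' * d - 2 * n' * d' + n * d'' = l^2 * n * d" "U = 2 * (d'' * d - d'^2) / d^2"
  shows "((n'' * d - n * d'') * d - 2 * d' * (n' * d - n * d')) / d^3 = l * (l * (n / d)) - U * (n / d)"
proof -
  have "(n'' * d - n * d'') * d - 2 * d' * (n' * d - n * d') = l^2 * d^2 * n - 2 * (d'' * d - d'^2) * n"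
    using assms(2) by algebra
  moreover have "l * (l * (n / d)) - U * (n / d) = (l^2 * d^2 * n - 2 * (d'' * d - d'^2) * n) / d^3"
    using assms(1) unfolding assms(3) by (simp add: field_simps power2_eq_square power3_eq_cube)
  ultimately show ?thesis by simp
qed

text \<open>Writing \<open>x = n / d\<close>, the equation of motion becomes the Hirota-type bilinear equations
  \<open>n\<^sub>i'' d - 2 n\<^sub>i' d' + n\<^sub>i d'' = l\<^sub>i\<^sup>2 n\<^sub>i d\<close>, provided the multiplier \<open>|Ax|\<^sup>2 + |x'|\<^sup>2\<close>
  equals \<open>2 (d'' d - d'\<^sup>2) / d\<^sup>2\<close>, which is what the last three identities guarantee.\<close>

lemma is_traj_ratio_state:
  fixes n1 n1' n1'' n2 n2' n2'' n3 n3' n3'' d d' d'' :: "real \<Rightarrow> real"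
  assumes dn1: "\<And>t. (n1 has_real_derivative n1' t) (at t)" "\<And>t. (n1' has_real_derivative n1'' t) (at t)"
    and dn2: "\<And>t. (n2 has_real_derivative n2' t) (at t)" "\<And>t. (n2' has_real_derivative n2'' t) (at t)"
    and dn3: "\<And>t. (n3 has_real_derivative n3' t) (at t)" "\<And>t. (n3' has_real_derivative n3'' t) (at t)"
    and dd: "\<And>t. (d has_real_derivative d' t) (at t)" "\<And>t. (d' has_real_derivative d'' t) (at t)"
    and nonzero: "\<And>t. d t \<noteq> 0"
    and bilinear1: "\<And>t. n1'' t * d t - 2 * n1' t * d' t + n1 t * d'' t = l1^2 * n1 t * d t"
    and bilinear2: "\<And>t. n2'' t * d t - 2 * n2' t * d' t + n2 t * d'' t = l2^2 * n2 t * d t"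
    and bilinear3: "\<And>t. n3'' t * d t - 2 * n3' t * d' t + n3 t * d'' t = l3^2 * n3 t * d t"
    and sphere: "\<And>t. (n1 t)^2 + (n2 t)^2 + (n3 t)^2 = (d t)^2"
    and tangent: "\<And>t. n1 t * n1' t + n2 t * n2' t + n3 t * n3' t = d t * d' t"
    and energy: "\<And>t. 2 * d'' t * d t - (d' t)^2 = l1^2 * (n1 t)^2 + l2^2 * (n2 t)^2 + l3^2 * (n3 t)^2
                 + (n1' t)^2 + (n2' t)^2 + (n3' t)^2"
  shows "is_traj (field l1 l2 l3) (\<lambda>t. ratio_state (n1 t) (n2 t) (n3 t) (d t) (n1' t) (n2' t) (n3' t) (d' t))"
  unfolding is_traj_def
proof
  fix t
  define y where "y t = ratio_state (n1 t) (n2 t) (n3 t) (d t) (n1' t) (n2' t) (n3' t) (d' t)" for t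
  define U where "U = (norm (Amat l1 l2 l3 (fst (y t))))^2 + (norm (snd (y t)))^2"
  have U: "U = 2 * (d'' t * d t - (d' t)^2) / (d t)^2"
    unfolding U_def y_def by (rule ratio_state_multiplier[OF nonzero sphere tangent energy])
  have "(y has_vector_derivative
     (vector [(n1' t * d t - n1 t * d' t) / (d t)^2, (n2' t * d t - n2 t * d' t) / (d t)^2,
              (n3' t * d t - n3 t * d' t) / (d t)^2],
      vector [((n1'' t * d t - n1 t * d'' t) * d t - 2 * d' t * (n1' t * d t - n1 t * d' t)) / (d t)^3,
              ((n2'' t * d t - n2 t * d'' t) * d t - 2 * d' t * (n2' t * d t - n2 t * d' t)) / (d t)^3,
              ((n3'' t * d t - n3 t * d'' t) * d t - 2 * d' t * (n3' t * d t - n3 t * d' t)) / (d t)^3])) (at t)"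
    unfolding y_def[abs_def] ratio_state_def
    by (intro has_vector_derivative_Pair has_vector_derivative_vector3 DERIV_divide_power2
        DERIV_divide_second dn1 dn2 dn3 dd nonzero)
  moreover have "field l1 l2 l3 (y t) = (snd (y t), vector [l1 * (l1 * (n1 t / d t)) - U * (n1 t / d t),
      l2 * (l2 * (n2 t / d t)) - U * (n2 t / d t), l3 * (l3 * (n3 t / d t)) - U * (n3 t / d t)])"
    by (simp add: field_eq U_def vec_eq_iff forall_3 algebra_simps) (simp add: y_def ratio_state_def)
  ultimately show "(y has_vector_derivative field l1 l2 l3 (y t)) (at t)"
    using bilinear_second_derivative_eq[OF nonzero bilinear1 U] bilinear_second_derivative_eq[OF nonzero bilinear2 U]
      bilinear_second_derivative_eq[OF nonzero bilinear3 U]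
    by (simp add: y_def ratio_state_def)
qed

section \<open>An explicit family of solutions\<close>

text \<open>The explicit one-parameter family of solutions: with \<open>X = e\<^sup>l\<^sup>1\<^sup>t\<close>, \<open>Y = e\<^sup>l\<^sup>2\<^sup>t\<close> and
  \<open>b = (l2 - l1) / (l1 + l2)\<close>, the position is \<open>(sol_A, sol_B, sol_C) / sol_D\<close>; primed polynomials are
  the \<open>t\<close>-derivatives. For \<open>m = 0\<close> it is the heteroclinic orbit \<open>\<gamma>\<close>, and varying \<open>m\<close> moves
  off the plane \<open>x\<^sub>2 = 0\<close> inside the stable manifold of the north pole.\<close>

definition sol_D :: "real \<Rightarrow> real \<Rightarrow> real \<Rightarrow> real \<Rightarrow> real \<Rightarrow> real \<Rightarrow> real" where
  "sol_D k1 k2 b m X Y = Y^2 + X^2*Y^2 + m^2*b^2 + m^2*X^2"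
definition sol_D' :: "real \<Rightarrow> real \<Rightarrow> real \<Rightarrow> real \<Rightarrow> real \<Rightarrow> real \<Rightarrow> real" where
  "sol_D' k1 k2 b m X Y = 2*k2*Y^2 + 2*(k1+k2)*X^2*Y^2 + 2*k1*m^2*X^2"
definition sol_D'' :: "real \<Rightarrow> real \<Rightarrow> real \<Rightarrow> real \<Rightarrow> real \<Rightarrow> real \<Rightarrow> real" where
  "sol_D'' k1 k2 b m X Y = 4*k2^2*Y^2 + 4*(k1+k2)^2*X^2*Y^2 + 4*k1^2*m^2*X^2"
definition sol_A :: "real \<Rightarrow> real \<Rightarrow> real \<Rightarrow> real \<Rightarrow> real \<Rightarrow> real \<Rightarrow> real" where
  "sol_A k1 k2 b m X Y = 2*X*Y^2 - 2*b*m^2*X"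
definition sol_A' :: "real \<Rightarrow> real \<Rightarrow> real \<Rightarrow> real \<Rightarrow> real \<Rightarrow> real \<Rightarrow> real" where
  "sol_A' k1 k2 b m X Y = 2*(k1+2*k2)*X*Y^2 - 2*b*m^2*k1*X"
definition sol_A'' :: "real \<Rightarrow> real \<Rightarrow> real \<Rightarrow> real \<Rightarrow> real \<Rightarrow> real \<Rightarrow> real" where
  "sol_A'' k1 k2 b m X Y = 2*(k1+2*k2)^2*X*Y^2 - 2*b*m^2*k1^2*X"
definition sol_B :: "real \<Rightarrow> real \<Rightarrow> real \<Rightarrow> real \<Rightarrow> real \<Rightarrow> real \<Rightarrow> real" where
  "sol_B k1 k2 b m X Y = 2*m*b*Y + 2*m*X^2*Y"
definition sol_B' :: "real \<Rightarrow> real \<Rightarrow> real \<Rightarrow> real \<Rightarrow> real \<Rightarrow> real \<Rightarrow> real" where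
  "sol_B' k1 k2 b m X Y = 2*m*b*k2*Y + 2*m*(2*k1+k2)*X^2*Y"
definition sol_B'' :: "real \<Rightarrow> real \<Rightarrow> real \<Rightarrow> real \<Rightarrow> real \<Rightarrow> real \<Rightarrow> real" where
  "sol_B'' k1 k2 b m X Y = 2*m*b*k2^2*Y + 2*m*(2*k1+k2)^2*X^2*Y"
definition sol_C :: "real \<Rightarrow> real \<Rightarrow> real \<Rightarrow> real \<Rightarrow> real \<Rightarrow> real \<Rightarrow> real" where
  "sol_C k1 k2 b m X Y = X^2*Y^2 - Y^2 + m^2*b^2 - m^2*X^2"
definition sol_C' :: "real \<Rightarrow> real \<Rightarrow> real \<Rightarrow> real \<Rightarrow> real \<Rightarrow> real \<Rightarrow> real" where
  "sol_C' k1 k2 b m X Y = 2*(k1+k2)*X^2*Y^2 - 2*k2*Y^2 - 2*k1*m^2*X^2"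
definition sol_C'' :: "real \<Rightarrow> real \<Rightarrow> real \<Rightarrow> real \<Rightarrow> real \<Rightarrow> real \<Rightarrow> real" where
  "sol_C'' k1 k2 b m X Y = 4*(k1+k2)^2*X^2*Y^2 - 4*k2^2*Y^2 - 4*k1^2*m^2*X^2"

lemmas sol_defs = sol_D_def sol_D'_def sol_D''_def sol_A_def sol_A'_def sol_A''_def
  sol_B_def sol_B'_def sol_B''_def sol_C_def sol_C'_def sol_C''_def

definition soliton_at :: "real \<Rightarrow> real \<Rightarrow> real \<Rightarrow> real \<Rightarrow> real \<Rightarrow> real \<Rightarrow> state" where
  "soliton_at k1 k2 b m X Y = ratio_state (sol_A k1 k2 b m X Y) (sol_B k1 k2 b m X Y) (sol_C k1 k2 b m X Y)
     (sol_D k1 k2 b m X Y) (sol_A' k1 k2 b m X Y) (sol_B' k1 k2 b m X Y) (sol_C' k1 k2 b m X Y)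
     (sol_D' k1 k2 b m X Y)"

definition soliton :: "real \<Rightarrow> real \<Rightarrow> real \<Rightarrow> real \<Rightarrow> state" where
  "soliton l1 l2 m t = soliton_at l1 l2 ((l2 - l1) / (l1 + l2)) m (exp (l1 * t)) (exp (l2 * t))"

context
  fixes k1 k2 b c m X Y :: real
  assumes k: "k1 = c * (1 - b)" "k2 = c * (1 + b)"
begin

lemma sol_bilinear:
  "sol_A'' k1 k2 b m X Y * sol_D k1 k2 b m X Y - 2 * sol_A' k1 k2 b m X Y * sol_D' k1 k2 b m X Y
     + sol_A k1 k2 b m X Y * sol_D'' k1 k2 b m X Y = k1^2 * sol_A k1 k2 b m X Y * sol_D k1 k2 b m X Y"
  "sol_B'' k1 k2 b m X Y * sol_D k1 k2 b m X Y - 2 * sol_B' k1 k2 b m X Y * sol_D' k1 k2 b m X Y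
     + sol_B k1 k2 b m X Y * sol_D'' k1 k2 b m X Y = k2^2 * sol_B k1 k2 b m X Y * sol_D k1 k2 b m X Y"
  "sol_C'' k1 k2 b m X Y * sol_D k1 k2 b m X Y - 2 * sol_C' k1 k2 b m X Y * sol_D' k1 k2 b m X Y
     + sol_C k1 k2 b m X Y * sol_D'' k1 k2 b m X Y = 0^2 * sol_C k1 k2 b m X Y * sol_D k1 k2 b m X Y"
  unfolding sol_defs k by (algebra, algebra, simp add: algebra_simps power2_eq_square)

lemma sol_energy:
  "2 * sol_D'' k1 k2 b m X Y * sol_D k1 k2 b m X Y - (sol_D' k1 k2 b m X Y)^2
   = k1^2 * (sol_A k1 k2 b m X Y)^2 + k2^2 * (sol_B k1 k2 b m X Y)^2 + 0^2 * (sol_C k1 k2 b m X Y)^2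
     + (sol_A' k1 k2 b m X Y)^2 + (sol_B' k1 k2 b m X Y)^2 + (sol_C' k1 k2 b m X Y)^2"
  unfolding sol_defs k by (simp add: algebra_simps power2_eq_square)

end

lemma sol_sphere:
  "(sol_A k1 k2 b m X Y)^2 + (sol_B k1 k2 b m X Y)^2 + (sol_C k1 k2 b m X Y)^2 = (sol_D k1 k2 b m X Y)^2"
  unfolding sol_defs by algebra

lemma sol_tangent:
  "sol_A k1 k2 b m X Y * sol_A' k1 k2 b m X Y + sol_B k1 k2 b m X Y * sol_B' k1 k2 b m X Y
     + sol_C k1 k2 b m X Y * sol_C' k1 k2 b m X Y = sol_D k1 k2 b m X Y * sol_D' k1 k2 b m X Y"
  unfolding sol_defs by (simp add: algebra_simps power2_eq_square)

lemma sol_D_pos: "Y > 0 \<Longrightarrow> sol_D k1 k2 b m X Y > 0"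
  unfolding sol_D_def by (intro add_pos_nonneg) simp_all

lemma sol_has_real_derivative:
  fixes k1 k2 b m :: real
  defines "X \<equiv> \<lambda>t. exp (k1 * t)" and "Y \<equiv> \<lambda>t. exp (k2 * t)"
  shows
  "((\<lambda>t. sol_D k1 k2 b m (X t) (Y t)) has_real_derivative sol_D' k1 k2 b m (X t) (Y t)) (at t)"
  "((\<lambda>t. sol_D' k1 k2 b m (X t) (Y t)) has_real_derivative sol_D'' k1 k2 b m (X t) (Y t)) (at t)"
  "((\<lambda>t. sol_A k1 k2 b m (X t) (Y t)) has_real_derivative sol_A' k1 k2 b m (X t) (Y t)) (at t)"
  "((\<lambda>t. sol_A' k1 k2 b m (X t) (Y t)) has_real_derivative sol_A'' k1 k2 b m (X t) (Y t)) (at t)"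
  "((\<lambda>t. sol_B k1 k2 b m (X t) (Y t)) has_real_derivative sol_B' k1 k2 b m (X t) (Y t)) (at t)"
  "((\<lambda>t. sol_B' k1 k2 b m (X t) (Y t)) has_real_derivative sol_B'' k1 k2 b m (X t) (Y t)) (at t)"
  "((\<lambda>t. sol_C k1 k2 b m (X t) (Y t)) has_real_derivative sol_C' k1 k2 b m (X t) (Y t)) (at t)"
  "((\<lambda>t. sol_C' k1 k2 b m (X t) (Y t)) has_real_derivative sol_C'' k1 k2 b m (X t) (Y t)) (at t)"
  unfolding sol_defs X_def Y_def by (auto intro!: derivative_eq_intros simp: algebra_simps power2_eq_square)

lemma soliton_parameters:
  fixes l1 l2 :: real
  assumes "0 < l1 + l2"
  shows "l1 = (l1 + l2) / 2 * (1 - (l2 - l1) / (l1 + l2))" "l2 = (l1 + l2) / 2 * (1 + (l2 - l1) / (l1 + l2))"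
  using assms by (simp_all add: field_simps)

lemma is_traj_soliton:
  assumes "0 < l1" "0 < l2"
  shows "is_traj (field l1 l2 0) (soliton l1 l2 m)"
proof -
  define b where "b = (l2 - l1) / (l1 + l2)"
  have k: "l1 = (l1 + l2) / 2 * (1 - b)" "l2 = (l1 + l2) / 2 * (1 + b)"
    unfolding b_def using soliton_parameters[of l1 l2] assms by simp_all
  have "is_traj (field l1 l2 0) (\<lambda>t. soliton_at l1 l2 b m (exp (l1 * t)) (exp (l2 * t)))"
    unfolding soliton_at_def
    by (rule is_traj_ratio_state[OF sol_has_real_derivative(3-8,1,2) less_imp_neq[symmetric, OF sol_D_pos]
          sol_bilinear[OF k] sol_sphere sol_tangent sol_energy[OF k]]) simp
  then show ?thesis by (simp add: soliton_def[abs_def] b_def)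
qed

lemma soliton_in_TS2: "soliton l1 l2 m t \<in> TS2"
  unfolding soliton_def soliton_at_def
  by (intro ratio_state_TS2 sol_sphere sol_tangent less_imp_neq[symmetric] sol_D_pos) simp

lemma tendsto_ratio_state:
  assumes "(n1 \<longlongrightarrow> a1) F" "(n2 \<longlongrightarrow> a2) F" "(n3 \<longlongrightarrow> a3) F" "(d \<longlongrightarrow> e) F"
    "(n1' \<longlongrightarrow> a1') F" "(n2' \<longlongrightarrow> a2') F" "(n3' \<longlongrightarrow> a3') F" "(d' \<longlongrightarrow> e') F" "e \<noteq> 0"
  shows "((\<lambda>t. ratio_state (n1 t) (n2 t) (n3 t) (d t) (n1' t) (n2' t) (n3' t) (d' t))
           \<longlongrightarrow> ratio_state a1 a2 a3 e a1' a2' a3' e') F"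
  unfolding ratio_state_def
  by (intro tendsto_Pair tendsto_vector3 tendsto_divide tendsto_diff tendsto_mult tendsto_power assms)
     (simp_all add: assms)

text \<open>In the variables \<open>a = 1/X\<close>, \<open>c = 1/Y\<close> the solution is again a ratio of polynomials
  (those of \<^const>\<open>soliton_at\<close> multiplied by \<open>a\<^sup>2 c\<^sup>2\<close>), whose value at \<open>a = c = 0\<close> is the
  north pole.\<close>

definition soliton_at_infinity :: "real \<Rightarrow> real \<Rightarrow> real \<Rightarrow> real \<Rightarrow> real \<Rightarrow> real \<Rightarrow> state" where
  "soliton_at_infinity k1 k2 b m a c = ratio_state
    (2*a - 2*b*m^2*a*c^2) (2*m*b*a^2*c + 2*m*c) (1 - a^2 + m^2*b^2*a^2*c^2 - m^2*c^2)
    (a^2 + 1 + m^2*b^2*a^2*c^2 + m^2*c^2)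
    (2*(k1+2*k2)*a - 2*b*m^2*k1*a*c^2) (2*m*b*k2*a^2*c + 2*m*(2*k1+k2)*c)
    (2*(k1+k2) - 2*k2*a^2 - 2*k1*m^2*c^2) (2*k2*a^2 + 2*(k1+k2) + 2*k1*m^2*c^2)"

lemma soliton_at_inverse:
  assumes "X * a = 1" "Y * c = 1"
  shows "soliton_at k1 k2 b m X Y = soliton_at_infinity k1 k2 b m a c"
proof -
  have w: "a^2 * c^2 \<noteq> 0" using assms by auto
  have "sol_A k1 k2 b m X Y * (a^2 * c^2) = 2*a - 2*b*m^2*a*c^2"
    "sol_B k1 k2 b m X Y * (a^2 * c^2) = 2*m*b*a^2*c + 2*m*c"
    "sol_C k1 k2 b m X Y * (a^2 * c^2) = 1 - a^2 + m^2*b^2*a^2*c^2 - m^2*c^2"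
    "sol_D k1 k2 b m X Y * (a^2 * c^2) = a^2 + 1 + m^2*b^2*a^2*c^2 + m^2*c^2"
    "sol_A' k1 k2 b m X Y * (a^2 * c^2) = 2*(k1+2*k2)*a - 2*b*m^2*k1*a*c^2"
    "sol_B' k1 k2 b m X Y * (a^2 * c^2) = 2*m*b*k2*a^2*c + 2*m*(2*k1+k2)*c"
    "sol_C' k1 k2 b m X Y * (a^2 * c^2) = 2*(k1+k2) - 2*k2*a^2 - 2*k1*m^2*c^2"
    "sol_D' k1 k2 b m X Y * (a^2 * c^2) = 2*k2*a^2 + 2*(k1+k2) + 2*k1*m^2*c^2"
    unfolding sol_defs using assms by algebra+
  moreover have "soliton_at k1 k2 b m X Y = ratio_state
      (sol_A k1 k2 b m X Y * (a^2 * c^2)) (sol_B k1 k2 b m X Y * (a^2 * c^2))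
      (sol_C k1 k2 b m X Y * (a^2 * c^2)) (sol_D k1 k2 b m X Y * (a^2 * c^2))
      (sol_A' k1 k2 b m X Y * (a^2 * c^2)) (sol_B' k1 k2 b m X Y * (a^2 * c^2))
      (sol_C' k1 k2 b m X Y * (a^2 * c^2)) (sol_D' k1 k2 b m X Y * (a^2 * c^2))"
    by (simp only: soliton_at_def ratio_state_scale[OF w])
  ultimately show ?thesis unfolding soliton_at_infinity_def by (simp only:)
qed

lemma tendsto_soliton_at_infinity:
  assumes "(a \<longlongrightarrow> 0) F" "(c \<longlongrightarrow> 0) F"
  shows "((\<lambda>t. soliton_at_infinity k1 k2 b m (a t) (c t)) \<longlongrightarrow> (vector [0, 0, 1], 0)) F"
proof -
  have "((\<lambda>t. soliton_at_infinity k1 k2 b m (a t) (c t)) \<longlongrightarrow> soliton_at_infinity k1 k2 b m 0 0) F"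
    unfolding soliton_at_infinity_def by (intro tendsto_ratio_state tendsto_intros assms) simp
  moreover have "soliton_at_infinity k1 k2 b m 0 0 = (vector [0, 0, 1], 0)"
    by (simp add: soliton_at_infinity_def ratio_state_def vec_eq_iff forall_3 zero_prod_def)
  ultimately show ?thesis by simp
qed

lemma exp_neg_tendsto_zero: "0 < (l::real) \<Longrightarrow> ((\<lambda>t. exp (- l * t)) \<longlongrightarrow> 0) at_top"
  by (rule filterlim_compose[OF exp_at_bot filterlim_tendsto_neg_mult_at_bot[OF tendsto_const _ filterlim_ident]])
     simp

lemma soliton_tendsto_north_pole:
  assumes "0 < l1" "0 < l2"
  shows "(soliton l1 l2 m \<longlongrightarrow> (vector [0, 0, 1], 0)) at_top"
proof -
  have "soliton l1 l2 m
      = (\<lambda>t. soliton_at_infinity l1 l2 ((l2 - l1) / (l1 + l2)) m (exp (- l1 * t)) (exp (- l2 * t)))"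
    unfolding soliton_def by (intro ext soliton_at_inverse) (simp_all flip: exp_add)
  then show ?thesis
    by (simp only: tendsto_soliton_at_infinity[OF exp_neg_tendsto_zero exp_neg_tendsto_zero, OF assms])
qed

lemma soliton_in_stable_set:
  assumes "0 < l1" "0 < l2"
  shows "soliton l1 l2 m s \<in> stable_set (field l1 l2 0) TS2 (vector [0, 0, 1], 0)"
  by (rule traj_in_stable_set[OF is_traj_soliton[OF assms] soliton_in_TS2 soliton_tendsto_north_pole[OF assms]])

lemma reflected_soliton_in_unstable_set:
  assumes "0 < l1" "0 < l2"
  shows "reflect (soliton l1 l2 m (- s)) \<in> unstable_set (field l1 l2 0) TS2 (vector [0, 0, -1], 0)"
proof -
  have "((\<lambda>t. soliton l1 l2 m (- t)) \<longlongrightarrow> (vector [0, 0, 1], 0)) at_bot"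
    by (rule filterlim_compose[OF soliton_tendsto_north_pole[OF assms] filterlim_uminus_at_top_at_bot])
  from bounded_linear.tendsto[OF bounded_linear_reflect this]
  have "((\<lambda>t. reflect (soliton l1 l2 m (- t))) \<longlongrightarrow> (vector [0, 0, -1], 0)) at_bot"
    by (simp add: reflect_pole)
  then show ?thesis
    by (rule traj_in_unstable_set[OF is_traj_reflect[OF is_traj_soliton[OF assms]] reflect_TS2[OF soliton_in_TS2]])
qed

definition gamma_state :: "real \<Rightarrow> real \<Rightarrow> real \<Rightarrow> state" where
  "gamma_state l x1 x3 = (vector [x1, 0, x3], vector [- l * x1 * x3, 0, l * x1^2])"

lemma reflect_gamma_state: "reflect (gamma_state l x1 x3) = gamma_state l x1 (- x3)"
  by (simp add: reflect_def gamma_state_def vec_eq_iff forall_3)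

lemma soliton_at_zero:
  assumes "Y > 0"
  shows "soliton_at k1 k2 b 0 X Y = gamma_state k1 (2 * X / (1 + X^2)) ((X^2 - 1) / (1 + X^2))"
proof -
  have w: "Y^2 \<noteq> 0" using assms by simp
  have pos: "1 + X^2 \<noteq> 0" using add_pos_nonneg[of 1 "X^2"] by simp
  have "soliton_at k1 k2 b 0 X Y = ratio_state (2 * X * Y^2) (0 * Y^2) ((X^2 - 1) * Y^2) ((1 + X^2) * Y^2)
      (2 * (k1 + 2 * k2) * X * Y^2) (0 * Y^2) ((2 * (k1 + k2) * X^2 - 2 * k2) * Y^2)
      ((2 * k2 + 2 * (k1 + k2) * X^2) * Y^2)"
    unfolding soliton_at_def sol_defs by (simp add: algebra_simps)
  also have "\<dots> = ratio_state (2 * X) 0 (X^2 - 1) (1 + X^2) (2 * (k1 + 2 * k2) * X) 0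
      (2 * (k1 + k2) * X^2 - 2 * k2) (2 * k2 + 2 * (k1 + k2) * X^2)"
    by (rule ratio_state_scale[OF w])
  also have "\<dots> = gamma_state k1 (2 * X / (1 + X^2)) ((X^2 - 1) / (1 + X^2))"
  proof -
    have "(2 * (k1 + 2 * k2) * X * (1 + X^2) - 2 * X * (2 * k2 + 2 * (k1 + k2) * X^2)) / (1 + X^2)^2
        = - k1 * (2 * X / (1 + X^2)) * ((X^2 - 1) / (1 + X^2))"
      using pos by (simp add: divide_simps) (simp add: algebra_simps power2_eq_square)
    moreover have "((2 * (k1 + k2) * X^2 - 2 * k2) * (1 + X^2) - (X^2 - 1) * (2 * k2 + 2 * (k1 + k2) * X^2))
        / (1 + X^2)^2 = k1 * (2 * X / (1 + X^2))^2"
      using pos by (simp add: divide_simps) (simp add: algebra_simps power2_eq_square)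
    ultimately show ?thesis by (simp add: ratio_state_def gamma_state_def vec_eq_iff forall_3)
  qed
  finally show ?thesis .
qed

lemma soliton_zero:
  "soliton l1 l2 0 t = gamma_state l1 (2 * exp (l1 * t) / (1 + exp (l1 * t)^2))
     ((exp (l1 * t)^2 - 1) / (1 + exp (l1 * t)^2))"
  unfolding soliton_def by (rule soliton_at_zero) simp

lemma reflect_soliton_zero: "reflect (soliton l1 l2 0 (- t)) = soliton l1 l2 0 t"
proof -
  define X X' where "X = exp (l1 * t)" and "X' = exp (l1 * - t)"
  have inv: "X * X' = 1" by (simp add: X_def X'_def flip: exp_add)
  have pos: "1 + X^2 \<noteq> 0" "1 + X'^2 \<noteq> 0" using add_pos_nonneg[of 1 "X^2"] add_pos_nonneg[of 1 "X'^2"] by simp_all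
  have "2 * X' / (1 + X'^2) = 2 * X / (1 + X^2)"
    using pos by (simp add: frac_eq_eq) (use inv in algebra)
  moreover have "- ((X'^2 - 1) / (1 + X'^2)) = (X^2 - 1) / (1 + X^2)"
    using pos by (simp add: frac_eq_eq minus_divide_left) (use inv in algebra)
  ultimately show ?thesis
    unfolding soliton_zero reflect_gamma_state X_def[symmetric] X'_def[symmetric] by simp
qed

definition soliton_variation :: "real \<Rightarrow> real \<Rightarrow> real \<Rightarrow> real \<Rightarrow> real \<Rightarrow> state" where
  "soliton_variation k1 k2 b X Y = (vector [0, 2 * (b + X^2) / (Y * (1 + X^2)), 0],
     vector [0, 2 * (- b * k2 + (2 * k1 - k2 - b * k2 - 2 * b * k1) * X^2 - k2 * X^4) / (Y * (1 + X^2)^2), 0])"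

lemma soliton_at_has_vector_derivative_parameter:
  assumes "Y > 0"
  shows "((\<lambda>m. soliton_at k1 k2 b m X Y) has_vector_derivative soliton_variation k1 k2 b X Y) (at 0)"
proof -
  have X: "1 + X^2 > 0" by (simp add: add_pos_nonneg)
  have D: "Y^2 + X^2 * Y^2 > 0" using assms by (simp add: add_pos_nonneg)
  have "(2 * b * Y + 2 * X^2 * Y) / (Y^2 + X^2 * Y^2) = 2 * (b + X^2) / (Y * (1 + X^2))"
    using assms X D by (simp add: divide_simps) (simp add: algebra_simps power2_eq_square)
  moreover have "((2 * b * k2 * Y + (4 * k1 + 2 * k2) * X^2 * Y) * (Y^2 + X^2 * Y^2)
      - (2 * b * Y + 2 * X^2 * Y) * (2 * k2 * Y^2 + (2 * k1 + 2 * k2) * X^2 * Y^2))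
      * (Y^2 + X^2 * Y^2)^2 / (Y^2 + X^2 * Y^2) ^ 4
    = 2 * (- b * k2 + (2 * k1 - k2 - b * k2 - 2 * b * k1) * X^2 - k2 * X^4) / (Y * (1 + X^2)^2)"
    using assms X D by (simp add: divide_simps) (simp add: algebra_simps power2_eq_square power4_eq_xxxx)
  ultimately show ?thesis
    unfolding soliton_at_def ratio_state_def soliton_variation_def using D
    by (intro has_vector_derivative_Pair has_vector_derivative_vector3)
       (auto intro!: derivative_eq_intros simp: sol_defs)
qed

text \<open>The determinant is \<open>8 l2 (l2 - l1) / (l1 + l2)\<close> for the parameters of \<^const>\<open>soliton\<close>:
  this is where \<open>l2 > l1\<close> enters.\<close>

lemma soliton_variation_determinant:
  fixes k1 k2 b c X X' Y Y' :: real
  assumes k: "k1 = c * (1 - b)" "k2 = c * (1 + b)" and inv: "X * X' = 1" "Y * Y' = 1"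
  shows "fst (soliton_variation k1 k2 b X Y) $ 2 * (- snd (soliton_variation k1 k2 b X' Y') $ 2)
      - snd (soliton_variation k1 k2 b X Y) $ 2 * fst (soliton_variation k1 k2 b X' Y') $ 2 = 8 * b * c * (1 + b)"
proof -
  have pos: "1 + X^2 \<noteq> 0" "1 + X'^2 \<noteq> 0"
    using add_pos_nonneg[of 1 "X^2"] add_pos_nonneg[of 1 "X'^2"] by simp_all
  have nz: "Y \<noteq> 0" "Y' \<noteq> 0" "X \<noteq> 0" using inv by auto
  show ?thesis using pos nz by (simp add: soliton_variation_def divide_simps) (use k inv in algebra)
qed

section \<open>Orbits along the great circle\<close>

lemma derivative_positive_of_tendsto:
  fixes f g :: "real \<Rightarrow> real"
  assumes df: "\<And>t. (f has_real_derivative g t) (at t)" and cont: "\<And>t. isCont g t"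
    and nonzero: "\<And>t. g t \<noteq> 0" and lim: "(f \<longlongrightarrow> L) at_top" and below: "f t < L"
  shows "g t > 0"
proof (rule ccontr)
  assume "\<not> g t > 0"
  then have neg: "g t < 0" using nonzero[of t] by linarith
  have neg_after: "g \<tau> < 0" if "t \<le> \<tau>" for \<tau>
  proof (rule ccontr)
    assume "\<not> g \<tau> < 0"
    then have "\<exists>s\<ge>t. s \<le> \<tau> \<and> g s = 0" using neg that cont by (intro IVT) auto
    with nonzero show False by blast
  qed
  have "eventually (\<lambda>T. f T \<le> f t) at_top"
    using eventually_ge_at_top[of t]
  proof eventually_elim
    case (elim T)
    show ?case
      by (rule DERIV_nonpos_imp_nonincreasing[of t T f, OF elim]) (use df neg_after less_imp_le in blast)
  qed
  then have "L \<le> f t" using tendsto_le[OF _ tendsto_const lim] by simp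
  with below show False by simp
qed

lemma plane_zero_energy_momentum:
  assumes "z \<in> TS2" "fst z $ 2 = 0" "snd z $ 2 = 0" "energy l1 l2 0 z = 0"
  defines "R \<equiv> fst z $ 1 * snd z $ 3 - fst z $ 3 * snd z $ 1"
  shows "snd z = vector [- R * fst z $ 3, 0, R * fst z $ 1]" "R^2 = l1^2 * (fst z $ 1)^2"
proof -
  obtain x p where z: "z = (x, p)" by (cases z)
  have sphere: "(x $ 1)^2 + (x $ 3)^2 = 1"
    using assms(1,2) norm_power2_vec3[of x] by (simp add: z TS2_def)
  have tangent: "x $ 1 * p $ 1 + x $ 3 * p $ 3 = 0" using assms(1,2) by (simp add: z TS2_def inner_vec3)
  have energy: "(p $ 1)^2 + (p $ 3)^2 = l1^2 * (x $ 1)^2"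
    using assms(2-4) by (simp add: z energy_eq norm_power2_vec3 power_mult_distrib)
  show "snd z = vector [- R * fst z $ 3, 0, R * fst z $ 1]"
    using sphere tangent assms(3) unfolding R_def z by (simp add: vec_eq_iff forall_3) algebra
  have "R^2 = ((x $ 1)^2 + (x $ 3)^2) * ((p $ 1)^2 + (p $ 3)^2) - (x $ 1 * p $ 1 + x $ 3 * p $ 3)^2"
    unfolding R_def z by (simp add: algebra_simps power2_eq_square)
  then show "R^2 = l1^2 * (fst z $ 1)^2" using sphere tangent energy by (simp add: z)
qed

lemma traj_on_gamma:
  assumes l1: "0 < l1" and y: "is_traj (field l1 l2 0) y"
    and plane: "\<And>t. y t \<in> TS2 \<and> fst (y t) $ 2 = 0 \<and> fst (y t) $ 1 > 0"
    and top: "(y \<longlongrightarrow> (vector [0, 0, 1], 0)) at_top"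
  obtains x1 x3 where "x1 > 0" "x1^2 + x3^2 = 1" "y t = gamma_state l1 x1 x3"
proof -
  let ?x = "\<lambda>\<tau> i. fst (y \<tau>) $ i" and ?p = "\<lambda>\<tau> i. snd (y \<tau>) $ i"
  define R where "R \<tau> = ?x \<tau> 1 * ?p \<tau> 3 - ?x \<tau> 3 * ?p \<tau> 1" for \<tau>
  have energy: "energy l1 l2 0 (y \<tau>) = 0" for \<tau>
    using subsetD[OF stable_set_subset_energy_level traj_in_stable_set[OF y _ top]] plane
    by (auto simp: energy_level_def energy_pole)
  have "((\<lambda>t. ?x t 2) has_real_derivative ?p \<tau> 2) (at \<tau>)" for \<tau>
    by (rule traj_has_real_derivative_component(1)[OF y])
  moreover have "(\<lambda>t. ?x t 2) = (\<lambda>t. 0)" using plane by auto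
  ultimately have p2: "?p \<tau> 2 = 0" for \<tau> using DERIV_const DERIV_unique by metis
  note momentum = plane_zero_energy_momentum[OF _ _ p2 energy, folded R_def, OF conjunct1[OF plane]
      conjunct1[OF conjunct2[OF plane]]]
  have sphere: "(?x \<tau> 1)^2 + (?x \<tau> 3)^2 = 1" for \<tau>
    using plane[of \<tau>] norm_power2_vec3[of "fst (y \<tau>)"] by (auto simp: TS2_def case_prod_beta)
  have p3: "?p \<tau> 3 = R \<tau> * ?x \<tau> 1" for \<tau> using momentum(1)[of \<tau>] by (simp add: vec_eq_iff)
  have p3_nonzero: "?p \<tau> 3 \<noteq> 0" for \<tau>
    using momentum(2)[of \<tau>] plane[of \<tau>] l1 p3[of \<tau>] by auto
  have "?p t 3 > 0"
  proof (rule derivative_positive_of_tendsto[where f = "\<lambda>t. ?x t 3" and g = "\<lambda>t. ?p t 3" and L = 1])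
    show "((\<lambda>t. ?x t 3) has_real_derivative ?p \<tau> 3) (at \<tau>)" for \<tau>
      by (rule traj_has_real_derivative_component(1)[OF y])
    show "isCont (\<lambda>t. ?p t 3) \<tau>" for \<tau>
      by (rule DERIV_isCont[OF traj_has_real_derivative_component(2)[OF y]])
    show "((\<lambda>t. ?x t 3) \<longlongrightarrow> 1) at_top"
      using tendsto_vec_nth[OF tendsto_fst[OF top], of 3] by simp
    have "0 < (?x t 1)^2" using plane[of t] by simp
    then have "(?x t 3)^2 < 1" using sphere[of t] by linarith
    then show "?x t 3 < 1" by (simp add: power2_less_1_iff)
  qed (use p3_nonzero in blast)
  then have "R t > 0" using p3[of t] plane[of t] by (simp add: zero_less_mult_iff)
  have "(R t)^2 = (l1 * ?x t 1)^2" using momentum(2)[of t] by (simp add: power_mult_distrib)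
  then have "R t = l1 * ?x t 1"
    by (rule power2_eq_imp_eq) (use \<open>R t > 0\<close> plane[of t] l1 in simp_all)
  then have "y t = gamma_state l1 (?x t 1) (?x t 3)"
    using momentum(1)[of t] plane[of t]
    by (simp add: prod_eq_iff gamma_state_def vec_eq_iff forall_3 power2_eq_square)
  then show ?thesis using that plane[of t] sphere[of t] by blast
qed

lemma gamma_state_on_soliton:
  assumes "0 < l1" "x1 > 0" "x1^2 + x3^2 = 1"
  obtains s where "soliton l1 l2 0 s = gamma_state l1 x1 x3"
proof -
  have "x3^2 < 1" using assms(2,3) by (smt (verit) zero_less_power)
  then have "1 + x3 > 0" by (simp add: power2_less_1_iff)
  define X where "X = (1 + x3) / x1"
  have X_pos: "X > 0" using \<open>1 + x3 > 0\<close> assms(2) by (simp add: X_def)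
  have X_x1: "X * x1 = 1 + x3" using assms(2) by (simp add: X_def)
  have denom: "1 + X^2 > 0" by (simp add: add_pos_nonneg)
  have "x1 * (x1 * (1 + X^2) - 2 * X) = 0" using X_x1 assms(3) by algebra
  then have x1: "x1 = 2 * X / (1 + X^2)" using assms(2) denom by (simp add: eq_divide_eq)
  have "x1^2 * (x3 * (1 + X^2) - (X^2 - 1)) = 0" using X_x1 assms(3) by algebra
  then have x3: "x3 = (X^2 - 1) / (1 + X^2)" using assms(2) denom by (simp add: eq_divide_eq)
  have "exp (l1 * (ln X / l1)) = X" using assms(1) X_pos by simp
  then have "soliton l1 l2 0 (ln X / l1) = gamma_state l1 x1 x3" by (simp add: soliton_zero x1 x3)
  then show ?thesis by (rule that)
qed

section \<open>Transversality\<close>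

definition energy_tangent_space :: "real \<Rightarrow> real \<Rightarrow> real \<Rightarrow> state \<Rightarrow> state set" where
  "energy_tangent_space l1 l2 l3 z = {w. inner (fst z) (fst w) = 0
     \<and> inner (fst w) (snd z) + inner (fst z) (snd w) = 0
     \<and> inner (snd z) (snd w) = inner (Amat l1 l2 l3 (fst z)) (Amat l1 l2 l3 (fst w))}"

lemma subspace_energy_tangent_space: "subspace (energy_tangent_space l1 l2 l3 z)"
  unfolding subspace_def energy_tangent_space_def
  by (simp add: inner_add_right inner_add_left linear_add[OF linear_Amat] linear_scale[OF linear_Amat]
      distrib_left[symmetric])

lemma span_tangent_cone_energy_level:
  assumes "z \<in> energy_level l1 l2 l3 q"
  shows "span (tangent_cone (energy_level l1 l2 l3 q) z) \<subseteq> energy_tangent_space l1 l2 l3 z"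
proof (rule span_minimal[OF _ subspace_energy_tangent_space], rule subsetI)
  fix v assume v: "v \<in> tangent_cone (energy_level l1 l2 l3 q) z"
  have "energy_level l1 l2 l3 q \<subseteq> TS2" "z \<in> TS2" using assms by (auto simp: energy_level_def)
  from tangent_cone_TS2[OF v this] tangent_cone_energy_level[OF v assms]
  show "v \<in> energy_tangent_space l1 l2 l3 z" by (simp add: energy_tangent_space_def)
qed

lemma cramer_2x2:
  fixes a b c d u v :: real
  assumes "a * d - b * c \<noteq> 0"
  shows "\<exists>\<beta> \<gamma>. u = \<beta> * a + \<gamma> * c \<and> v = \<beta> * b + \<gamma> * d"
proof -
  define D where "D = a * d - b * c"
  have "u = (u * D) / D" "v = (v * D) / D" using assms by (simp_all add: D_def)
  then have "u = (u * d - v * c) / D * a + (a * v - b * u) / D * c"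
    "v = (u * d - v * c) / D * b + (a * v - b * u) / D * d"
    by (simp_all add: D_def add_divide_distrib[symmetric] algebra_simps)
  then show ?thesis by blast
qed

definition vertical :: "state \<Rightarrow> bool" where
  "vertical v \<longleftrightarrow> fst v $ 1 = 0 \<and> fst v $ 3 = 0 \<and> snd v $ 1 = 0 \<and> snd v $ 3 = 0"

lemma energy_tangent_space_gamma_state:
  assumes l1: "l1 > 0" and x1: "x1 > 0" and sphere: "x1^2 + x3^2 = 1"
    and v: "vertical v" "vertical v'" and det: "fst v $ 2 * snd v' $ 2 - snd v $ 2 * fst v' $ 2 \<noteq> 0"
    and w: "w \<in> energy_tangent_space l1 l2 0 (gamma_state l1 x1 x3)"
  shows "\<exists>\<alpha> \<beta> \<gamma>. w = \<alpha> *\<^sub>R field l1 l2 0 (gamma_state l1 x1 x3) + \<beta> *\<^sub>R v + \<gamma> *\<^sub>R v'"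
proof -
  let ?z = "gamma_state l1 x1 x3"
  obtain u q where uq: "w = (u, q)" by (cases w)
  have c1: "x1 * u$1 + x3 * u$3 = 0"
    and c2: "u$1 * (- l1*x1*x3) + u$3 * (l1*x1^2) + x1 * q$1 + x3 * q$3 = 0"
    and c3: "(- l1*x1*x3) * q$1 + (l1*x1^2) * q$3 = (l1*x1) * (l1 * u$1)"
    using w by (simp_all add: energy_tangent_space_def gamma_state_def uq inner_vec3)
  define R where "R = x1 * u$3 - x3 * u$1"
  have nz: "l1 * x1 \<noteq> 0" using l1 x1 by simp
  have u1: "u$1 = - x3 * R" and u3: "u$3 = x1 * R" unfolding R_def using c1 sphere by algebra+
  have "l1 * x1 * (q$1 - l1 * R * (1 - 2*x1^2)) = 0" unfolding R_def using c1 c2 c3 sphere by algebra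
  then have q1: "q$1 = l1 * R * (1 - 2*x1^2)" using nz by simp
  have "l1 * x1 * (q$3 + 2 * l1 * x1 * x3 * R) = 0" unfolding R_def using c1 c2 c3 sphere by algebra
  then have q3: "q$3 = - 2 * l1 * x1 * x3 * R" using nz by simp
  have "(norm (snd ?z))^2 = l1^2 * x1^2 * (x1^2 + x3^2)"
    by (simp add: gamma_state_def norm_power2_vec3) algebra
  then have norm_p: "(norm (snd ?z))^2 = l1^2 * x1^2" using sphere by simp
  have norm_Ax: "(norm (Amat l1 l2 0 (fst ?z)))^2 = l1^2 * x1^2"
    by (simp add: gamma_state_def norm_power2_vec3 power_mult_distrib)
  have field: "field l1 l2 0 ?z = (vector [- l1*x1*x3, 0, l1*x1^2],
      vector [l1^2*x1 - 2*l1^2*x1^3, 0, - 2*l1^2*x1^2*x3])"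
    unfolding field_eq norm_p norm_Ax
    by (simp add: gamma_state_def vec_eq_iff forall_3 algebra_simps power2_eq_square power3_eq_cube)
  define \<alpha> where "\<alpha> = R / (l1 * x1)"
  obtain \<beta> \<gamma> where \<beta>\<gamma>: "u$2 = \<beta> * fst v $ 2 + \<gamma> * fst v' $ 2" "q$2 = \<beta> * snd v $ 2 + \<gamma> * snd v' $ 2"
    using cramer_2x2[OF det] by blast
  have "\<alpha> * (- l1*x1*x3) = u$1" "\<alpha> * (l1*x1^2) = u$3"
    "\<alpha> * (l1^2*x1 - 2*l1^2*x1^3) = q$1" "\<alpha> * (- 2*l1^2*x1^2*x3) = q$3"
    unfolding \<alpha>_def u1 u3 q1 q3 using nz by (simp_all add: field_simps power2_eq_square power3_eq_cube)
  then have "w = \<alpha> *\<^sub>R field l1 l2 0 ?z + \<beta> *\<^sub>R v + \<gamma> *\<^sub>R v'"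
    using \<beta>\<gamma> v unfolding field uq vertical_def by (simp add: prod_eq_iff vec_eq_iff forall_3)
  then show ?thesis by blast
qed

lemma sum_spans_tangent_cones_subset:
  assumes "W1 \<subseteq> E" "W2 \<subseteq> E"
  shows "{a + b |a b. a \<in> span (tangent_cone W1 z) \<and> b \<in> span (tangent_cone W2 z)}
    \<subseteq> span (tangent_cone E z)"
proof
  fix x assume "x \<in> {a + b |a b. a \<in> span (tangent_cone W1 z) \<and> b \<in> span (tangent_cone W2 z)}"
  then obtain a b where "x = a + b" "a \<in> span (tangent_cone W1 z)" "b \<in> span (tangent_cone W2 z)"
    by blast
  then show "x \<in> span (tangent_cone E z)"
    using span_mono[OF tangent_cone_mono[OF assms(1)]] span_mono[OF tangent_cone_mono[OF assms(2)]]
    by (metis span_add subsetD)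
qed

lemma energy_level_north_pole:
  "energy_level l1 l2 0 (vector [0, 0, 1], 0) = energy_level l1 l2 0 (vector [0, 0, -1], 0)"
  by (simp add: energy_level_def energy_pole)

lemma soliton_zero_gamma_state:
  obtains x1 x3 where "x1 > 0" "x1^2 + x3^2 = 1" "soliton l1 l2 0 s = gamma_state l1 x1 x3"
proof -
  define X where "X = exp (l1 * s)"
  have pos: "1 + X^2 > 0" by (simp add: add_pos_nonneg)
  have "2 * X / (1 + X^2) > 0" using pos by (simp add: X_def)
  moreover have "(2 * X / (1 + X^2))^2 + ((X^2 - 1) / (1 + X^2))^2 = 1"
    using pos by (simp add: divide_simps) algebra
  ultimately show ?thesis using that soliton_zero[of l1 l2 s] by (simp add: X_def)
qed

lemma vertical_soliton_variation: "vertical (soliton_variation k1 k2 b X Y)"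
  by (simp add: vertical_def soliton_variation_def)

lemma vertical_reflect: "vertical v \<Longrightarrow> vertical (reflect v)"
  by (simp add: vertical_def reflect_def)

lemma soliton_tangent_vectors:
  assumes "0 < l1" "0 < l2"
  defines "b \<equiv> (l2 - l1) / (l1 + l2)"
  shows "field l1 l2 0 (soliton l1 l2 0 s)
           \<in> tangent_cone (stable_set (field l1 l2 0) TS2 (vector [0, 0, 1], 0)) (soliton l1 l2 0 s)"
    "soliton_variation l1 l2 b (exp (l1 * s)) (exp (l2 * s))
           \<in> tangent_cone (stable_set (field l1 l2 0) TS2 (vector [0, 0, 1], 0)) (soliton l1 l2 0 s)"
    "reflect (soliton_variation l1 l2 b (exp (l1 * - s)) (exp (l2 * - s)))
           \<in> tangent_cone (unstable_set (field l1 l2 0) TS2 (vector [0, 0, -1], 0)) (soliton l1 l2 0 s)"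
proof -
  have at: "soliton l1 l2 m t = soliton_at l1 l2 b m (exp (l1 * t)) (exp (l2 * t))" for m t
    by (simp add: soliton_def b_def)
  show "field l1 l2 0 (soliton l1 l2 0 s)
      \<in> tangent_cone (stable_set (field l1 l2 0) TS2 (vector [0, 0, 1], 0)) (soliton l1 l2 0 s)"
    by (rule traj_field_in_tangent_cone[OF is_traj_soliton[OF assms(1,2)] soliton_in_stable_set[OF assms(1,2)]])
  from has_vector_derivative_in_tangent_cone[OF soliton_at_has_vector_derivative_parameter, of "exp (l2 * s)"]
  show "soliton_variation l1 l2 b (exp (l1 * s)) (exp (l2 * s))
      \<in> tangent_cone (stable_set (field l1 l2 0) TS2 (vector [0, 0, 1], 0)) (soliton l1 l2 0 s)"
    using soliton_in_stable_set[OF assms(1,2)] by (simp add: at)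
  have "reflect (soliton_variation l1 l2 b (exp (l1 * - s)) (exp (l2 * - s)))
      \<in> tangent_cone (unstable_set (field l1 l2 0) TS2 (vector [0, 0, -1], 0))
          (reflect (soliton_at l1 l2 b 0 (exp (l1 * - s)) (exp (l2 * - s))))"
    by (rule has_vector_derivative_in_tangent_cone[OF bounded_linear.has_vector_derivative[OF
          bounded_linear_reflect soliton_at_has_vector_derivative_parameter]])
       (use reflected_soliton_in_unstable_set[OF assms(1,2)] in \<open>simp_all add: at\<close>)
  then show "reflect (soliton_variation l1 l2 b (exp (l1 * - s)) (exp (l2 * - s)))
      \<in> tangent_cone (unstable_set (field l1 l2 0) TS2 (vector [0, 0, -1], 0)) (soliton l1 l2 0 s)"
    using reflect_soliton_zero[of l1 l2 s] by (simp add: at)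
qed

lemma soliton_variations_independent:
  assumes "0 < l1" "l1 < l2" and b_def: "b = (l2 - l1) / (l1 + l2)"
    and v_def: "v = soliton_variation l1 l2 b (exp (l1 * s)) (exp (l2 * s))"
    and v'_def: "v' = reflect (soliton_variation l1 l2 b (exp (l1 * - s)) (exp (l2 * - s)))"
  shows "fst v $ 2 * snd v' $ 2 - snd v $ 2 * fst v' $ 2 \<noteq> 0"
proof -
  have "fst v $ 2 * snd v' $ 2 - snd v $ 2 * fst v' $ 2 = 8 * b * ((l1 + l2) / 2) * (1 + b)"
    unfolding v_def v'_def using soliton_parameters[of l1 l2] assms(1,2)
    by (subst soliton_variation_determinant[symmetric, where X' = "exp (l1 * - s)" and Y' = "exp (l2 * - s)"])
       (simp_all add: b_def reflect_def flip: exp_add)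
  moreover have "b > 0" using assms(1,2) by (simp add: b_def)
  ultimately show ?thesis using assms(1,2) by simp
qed

lemma transversal_at_soliton_zero:
  assumes "0 < l1" "l1 < l2"
  shows "transversal_at (stable_set (field l1 l2 0) TS2 (vector [0, 0, 1], 0))
    (unstable_set (field l1 l2 0) TS2 (vector [0, 0, -1], 0))
    (energy_level l1 l2 0 (vector [0, 0, -1], 0)) (soliton l1 l2 0 s)"
proof -
  let ?W1 = "stable_set (field l1 l2 0) TS2 (vector [0, 0, 1], 0)"
  let ?W2 = "unstable_set (field l1 l2 0) TS2 (vector [0, 0, -1], 0)"
  let ?E = "energy_level l1 l2 0 (vector [0, 0, -1], 0)"
  let ?z = "soliton l1 l2 0 s"
  define b where "b = (l2 - l1) / (l1 + l2)"
  define v v' where "v = soliton_variation l1 l2 b (exp (l1 * s)) (exp (l2 * s))"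
    and "v' = reflect (soliton_variation l1 l2 b (exp (l1 * - s)) (exp (l2 * - s)))"
  have l: "0 < l1" "0 < l2" using assms by simp_all
  have z: "?z \<in> ?W1" "?z \<in> ?W2"
    using soliton_in_stable_set[OF l] reflected_soliton_in_unstable_set[OF l, of 0 s]
    by (simp_all add: reflect_soliton_zero)
  have W: "?W1 \<subseteq> ?E" "?W2 \<subseteq> ?E"
    using stable_set_subset_energy_level unstable_set_subset_energy_level
    by (metis energy_level_north_pole)+
  have det: "fst v $ 2 * snd v' $ 2 - snd v $ 2 * fst v' $ 2 \<noteq> 0"
    by (rule soliton_variations_independent[OF assms b_def v_def v'_def])
  have zE: "?z \<in> ?E" using W(1) z(1) by blast
  obtain x1 x3 where gamma: "x1 > 0" "x1^2 + x3^2 = 1" "?z = gamma_state l1 x1 x3"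
    by (rule soliton_zero_gamma_state)
  have "span (tangent_cone ?E ?z)
      \<subseteq> {a + b |a b. a \<in> span (tangent_cone ?W1 ?z) \<and> b \<in> span (tangent_cone ?W2 ?z)}"
  proof
    fix w assume "w \<in> span (tangent_cone ?E ?z)"
    with span_tangent_cone_energy_level[OF zE] have "w \<in> energy_tangent_space l1 l2 0 ?z" by blast
    then have w: "w \<in> energy_tangent_space l1 l2 0 (gamma_state l1 x1 x3)" by (simp only: gamma(3))
    have vertical: "vertical v" "vertical v'"
      by (simp_all add: v_def v'_def vertical_soliton_variation vertical_reflect)
    from energy_tangent_space_gamma_state[OF l(1) gamma(1,2) vertical det w]
    obtain \<alpha> \<beta> \<gamma> where "w = \<alpha> *\<^sub>R field l1 l2 0 (gamma_state l1 x1 x3) + \<beta> *\<^sub>R v + \<gamma> *\<^sub>R v'"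
      by blast
    then have "w = (\<alpha> *\<^sub>R field l1 l2 0 ?z + \<beta> *\<^sub>R v) + \<gamma> *\<^sub>R v'" by (simp add: gamma(3))
    moreover have "\<alpha> *\<^sub>R field l1 l2 0 ?z + \<beta> *\<^sub>R v \<in> span (tangent_cone ?W1 ?z)"
      using soliton_tangent_vectors[OF l, of s] by (intro span_add span_scale span_base) (simp_all add: v_def b_def)
    moreover have "\<gamma> *\<^sub>R v' \<in> span (tangent_cone ?W2 ?z)"
      using soliton_tangent_vectors[OF l, of s] by (intro span_scale span_base) (simp add: v'_def b_def)
    ultimately show "w \<in> {a + b |a b. a \<in> span (tangent_cone ?W1 ?z) \<and> b \<in> span (tangent_cone ?W2 ?z)}"
      by blast
  qed
  with sum_spans_tangent_cones_subset[OF W] z show ?thesis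
    unfolding transversal_at_def by blast
qed

lemma soliton_zero_in_half_plane:
  "soliton l1 l2 0 t \<in> TS2 \<and> fst (soliton l1 l2 0 t) $ 2 = 0 \<and> fst (soliton l1 l2 0 t) $ 1 > 0"
proof -
  obtain x1 x3 where "x1 > 0" "soliton l1 l2 0 t = gamma_state l1 x1 x3"
    by (rule soliton_zero_gamma_state)
  then show ?thesis using soliton_in_TS2[of l1 l2 0 t] by (simp add: gamma_state_def)
qed

lemma soliton_zero_tendsto_south_pole:
  assumes "0 < l1" "0 < l2"
  shows "(soliton l1 l2 0 \<longlongrightarrow> (vector [0, 0, -1], 0)) at_bot"
proof -
  have "((\<lambda>t. soliton l1 l2 0 (- t)) \<longlongrightarrow> (vector [0, 0, 1], 0)) at_bot"
    by (rule filterlim_compose[OF soliton_tendsto_north_pole[OF assms] filterlim_uminus_at_top_at_bot])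
  from bounded_linear.tendsto[OF bounded_linear_reflect this]
  show ?thesis by (simp add: reflect_pole reflect_soliton_zero)
qed

theorem proposition5:
  fixes l1 l2 l3 :: real
  assumes "l2 > l1" and "l1 > l3" and "l3 = 0"
  defines "P \<equiv> (vector [0, 0, -1] :: real^3, 0 :: real^3)"
      and "P' \<equiv> (vector [0, 0, 1] :: real^3, 0 :: real^3)"
      and "F \<equiv> field l1 l2 l3"
  shows "hyperbolic_equilibrium F TS2 P \<and> hyperbolic_equilibrium F TS2 P' \<and>
    (\<exists>y. is_traj F y \<and> (\<forall>t. y t \<in> TS2 \<and> fst (y t) $ 2 = 0 \<and> fst (y t) $ 1 > 0) \<and>
         (y \<longlongrightarrow> P) at_bot \<and> (y \<longlongrightarrow> P') at_top) \<and>
    (\<forall>y. is_traj F y \<and> (\<forall>t. y t \<in> TS2 \<and> fst (y t) $ 2 = 0 \<and> fst (y t) $ 1 > 0) \<and>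
         (y \<longlongrightarrow> P) at_bot \<and> (y \<longlongrightarrow> P') at_top \<longrightarrow>
       (\<forall>t. transversal_at (stable_set F TS2 P') (unstable_set F TS2 P)
               (energy_level l1 l2 l3 P) (y t)))"
proof -
  have l: "0 < l1" "0 < l2" using assms(1-3) by simp_all
  have "hyperbolic_equilibrium F TS2 P" "hyperbolic_equilibrium F TS2 P'"
    unfolding F_def P_def P'_def using hyperbolic_equilibrium_pole[OF l assms(3)] by simp_all
  moreover have "is_traj F (soliton l1 l2 0) \<and> (\<forall>t. soliton l1 l2 0 t \<in> TS2 \<and>
      fst (soliton l1 l2 0 t) $ 2 = 0 \<and> fst (soliton l1 l2 0 t) $ 1 > 0) \<and>
      (soliton l1 l2 0 \<longlongrightarrow> P) at_bot \<and> (soliton l1 l2 0 \<longlongrightarrow> P') at_top"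
    unfolding F_def P_def P'_def assms(3)
    using is_traj_soliton[OF l] soliton_zero_in_half_plane soliton_zero_tendsto_south_pole[OF l]
      soliton_tendsto_north_pole[OF l] by blast
  moreover have "transversal_at (stable_set F TS2 P') (unstable_set F TS2 P) (energy_level l1 l2 l3 P) (y t)"
    if traj: "is_traj F y" and plane: "\<forall>t. y t \<in> TS2 \<and> fst (y t) $ 2 = 0 \<and> fst (y t) $ 1 > 0"
      and lim: "(y \<longlongrightarrow> P') at_top" for y t
  proof -
    have y: "is_traj (field l1 l2 0) y" using traj by (simp add: F_def assms(3))
    have top: "(y \<longlongrightarrow> (vector [0, 0, 1], 0)) at_top" using lim by (simp add: P'_def)
    obtain x1 x3 where "x1 > 0" "x1^2 + x3^2 = 1" "y t = gamma_state l1 x1 x3"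
      using traj_on_gamma[OF l(1) y plane[rule_format] top] by blast
    moreover obtain s where "soliton l1 l2 0 s = gamma_state l1 x1 x3"
      using gamma_state_on_soliton[OF l(1) \<open>x1 > 0\<close> \<open>x1^2 + x3^2 = 1\<close>] by blast
    ultimately show ?thesis
      using transversal_at_soliton_zero[OF l(1) assms(1), of s] unfolding F_def P_def P'_def assms(3) by simp
  qed
  ultimately show ?thesis by blast
qed
end
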